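(* Let $\Omega\subseteq\mathbb R^d$, $F$ and $\mathcal I$ be as below, and suppose the PDE $F(x,V(x),DV(x),D^2V(x),[\mathcal IV](x))=0$ on $\overline\Omega$ satisfies the comparison principle. Let $(S,\mathcal I^h)_{h>0}$ be a numerical scheme that is monotone, stable, nonlocally consistent, and satisfies the technical condition (T). For each $h>0$ let $V^h\in B(\overline\Omega)$ be a solution of the scheme, i.e. $S(h,x,V^h,[\mathcal I^hV^h](x))=0$ for all $x\in\overline\Omega$. Then, as $h\to0$, $V^h$ converges locally uniformly on $\overline\Omega$ to the unique bounded viscosity solution of the PDE.
   Context: $\mathcal S^d$ is the set of real symmetric $d\times d$ matrices; $B(\overline\Omega)$ the bounded real functions on $\overline\Omega$. $F:\overline\Omega\times\mathbb R\times\mathbb R^d\times\mathcal S^d\times\mathbb R\to\mathbb R$ is locally bounded and $\mathcal I$ maps $B(\overline\Omega)$ into real functions on $\overline\Omega$. $C^2(\overline\Omega)$ means functions that are $C^2$ on a neighbourhood of $\overline\Omega$. For a locally bounded $u$ on a metric space, $u^*(x)=\limsup_{y\to x}u(y)$ and $u_*(x)=\liminf_{y\to x}u(y)$; $F^*,F_*$ are the envelopes of $F$ in all its arguments. An upper (resp. lower) semicontinuous $V:\overline\Omega\to\mathbb R$ is a viscosity subsolution (resp. supersolution) if for every $\varphi\in C^2(\overline\Omega)$ and $x\in\overline\Omega$ at which $V-\varphi$ has a local maximum (resp. minimum) relative to $\overline\Omega$, $F_*(x,V(x),D\varphi(x),D^2\varphi(x),[\mathcal IV](x))\le0$ (resp.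 $F^*(\ldots)\ge0$); a viscosity solution is both. Comparison principle: whenever $U,V\in B(\overline\Omega)$ are a subsolution and supersolution, $U\le V$. A scheme is a pair of maps $S:(0,\infty)\times\overline\Omega\times B(\overline\Omega)\times\mathbb R\to\mathbb R$ and $\mathcal I^h:B(\overline\Omega)\to B(\overline\Omega)$. Monotone: $S(h,x,V,\ell)\le S(h,x,\hat V,\ell)$ whenever $V\ge\hat V$ and $V(x)=\hat V(x)$. Stable: there is $C$ with $\|V^h\|_\infty\le C$ for every solution $V^h$ of the scheme and every $h$. Half-relaxed limits of a locally bounded family $(u^h)$: $\overline u(x)=\limsup_{h\to0,y\to x}u^h(y)$, $\underline u(x)=\liminf_{h\to0,y\to x}u^h(y)$. Nonlocally consistent: for every uniformly bounded family $(u^h)_{h>0}\subset B(\overline\Omega)$, every $\varphi\in C^2(\overline\Omega)$ and $x\in\overline\Omega$, $\liminf_{h\to0,y\to x,\xi\to0}S(h,y,\varphi+\xi,[\mathcal I^hu^h](y))\ge F_*(x,\varphi(x),D\varphi(x),D^2\varphi(x),[\mathcal I\overline u](x))$ and $\limsup_{h\to0,y\to x,\xi\to0}S(h,y,\varphi+\xi,[\mathcal I^hu^h](y))\le F^*(x,\varphi(x),D\varphi(x),D^2\varphi(x),[\mathcal I\underline u](x))$ ($\xi$ ranges over real constants). (T): there is $f:(0,\infty)\times\overline\Omega\to[0,\infty)$ with $\lim_{h\to0,y\to x}f(y,h)=0$ for all $x$ and $|S(h,x,\psi,\ell)-S(h,x,\varphi,\ell)|\le f(x,h)$ for all $h,x,\ell$,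 $\varphi\in B(\overline\Omega)$ and $\psi=\varphi\pm e^{-1/h}\mathbf 1_{\{x\}}$. *)

theory Defs
  imports "HOL-Analysis.Analysis"
begin

type_synonym 'n pt = "real^'n"
type_synonym 'n mat = "real^'n^'n"

text \<open>Restriction of a function to a set (extended by 0): functions on the closed set
  are represented as total functions that vanish outside it.\<close>
definition ext :: "'a set \<Rightarrow> ('a \<Rightarrow> real) \<Rightarrow> 'a \<Rightarrow> real" where
  "ext A u = (\<lambda>x. if x \<in> A then u x else 0)"

definition bdd_on :: "'a set \<Rightarrow> ('a \<Rightarrow> real) \<Rightarrow> bool" where
  "bdd_on A u \<longleftrightarrow> (\<exists>M. \<forall>x\<in>A. \<bar>u x\<bar> \<le> M)"

definition grad :: "('n::finite pt \<Rightarrow> real) \<Rightarrow> 'n pt \<Rightarrow> 'n pt" where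
  "grad \<phi> x = (\<chi> i. frechet_derivative \<phi> (at x) (axis i 1))"

definition hess :: "('n::finite pt \<Rightarrow> real) \<Rightarrow> 'n pt \<Rightarrow> 'n mat" where
  "hess \<phi> x = (\<chi> i j. frechet_derivative (\<lambda>y. grad \<phi> y $ i) (at x) (axis j 1))"

definition C2_nbhd :: "'n::finite pt set \<Rightarrow> ('n pt \<Rightarrow> real) \<Rightarrow> bool" where
  "C2_nbhd C \<phi> \<longleftrightarrow> (\<exists>U. open U \<and> C \<subseteq> U \<and>
      (\<forall>x\<in>U. \<phi> differentiable (at x) \<and> grad \<phi> differentiable (at x)) \<and>
      continuous_on U (hess \<phi>))"

definition usc_env :: "'a::topological_space set \<Rightarrow> ('a \<Rightarrow> real) \<Rightarrow> 'a \<Rightarrow> ereal" where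
  "usc_env A u x = Limsup (inf (nhds x) (principal A)) (\<lambda>y. ereal (u y))"

definition lsc_env :: "'a::topological_space set \<Rightarrow> ('a \<Rightarrow> real) \<Rightarrow> 'a \<Rightarrow> ereal" where
  "lsc_env A u x = Liminf (inf (nhds x) (principal A)) (\<lambda>y. ereal (u y))"

definition usc_on :: "'a::topological_space set \<Rightarrow> ('a \<Rightarrow> real) \<Rightarrow> bool" where
  "usc_on A u \<longleftrightarrow> (\<forall>x\<in>A. usc_env A u x \<le> ereal (u x))"

definition lsc_on :: "'a::topological_space set \<Rightarrow> ('a \<Rightarrow> real) \<Rightarrow> bool" where
  "lsc_on A u \<longleftrightarrow> (\<forall>x\<in>A. lsc_env A u x \<ge> ereal (u x))"

definition locally_bounded_on :: "'a::metric_space set \<Rightarrow> ('a \<Rightarrow> real) \<Rightarrow> bool" where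
  "locally_bounded_on A u \<longleftrightarrow>
     (\<forall>x\<in>A. \<exists>e>0. \<exists>M. \<forall>y\<in>A \<inter> ball x e. \<bar>u y\<bar> \<le> M)"

definition Sym :: "'n::finite mat set" where
  "Sym = {X. transpose X = X}"

definition Fdom :: "'n::finite pt set \<Rightarrow> ('n pt \<times> real \<times> 'n pt \<times> 'n mat \<times> real) set" where
  "Fdom \<Omega> = closure \<Omega> \<times> UNIV \<times> UNIV \<times> Sym \<times> UNIV"

definition Fun5 :: "('n::finite pt \<Rightarrow> real \<Rightarrow> 'n pt \<Rightarrow> 'n mat \<Rightarrow> real \<Rightarrow> real)
    \<Rightarrow> ('n pt \<times> real \<times> 'n pt \<times> 'n mat \<times> real) \<Rightarrow> real" where
  "Fun5 F = (\<lambda>(x, r, q, X, l). F x r q X l)"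

definition Fupper where "Fupper \<Omega> F x r q X l = usc_env (Fdom \<Omega>) (Fun5 F) (x, r, q, X, l)"
definition Flower where "Flower \<Omega> F x r q X l = lsc_env (Fdom \<Omega>) (Fun5 F) (x, r, q, X, l)"

definition loc_max_rel :: "'n::finite pt set \<Rightarrow> ('n pt \<Rightarrow> real) \<Rightarrow> 'n pt \<Rightarrow> bool" where
  "loc_max_rel C w x \<longleftrightarrow> (\<exists>e>0. \<forall>y\<in>C \<inter> ball x e. w y \<le> w x)"

definition loc_min_rel :: "'n::finite pt set \<Rightarrow> ('n pt \<Rightarrow> real) \<Rightarrow> 'n pt \<Rightarrow> bool" where
  "loc_min_rel C w x \<longleftrightarrow> (\<exists>e>0. \<forall>y\<in>C \<inter> ball x e. w x \<le> w y)"

definition visc_sub where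
  "visc_sub \<Omega> F I V \<longleftrightarrow> usc_on (closure \<Omega>) V \<and>
    (\<forall>\<phi> x. C2_nbhd (closure \<Omega>) \<phi> \<longrightarrow> x \<in> closure \<Omega> \<longrightarrow>
       loc_max_rel (closure \<Omega>) (\<lambda>y. V y - \<phi> y) x \<longrightarrow>
       Flower \<Omega> F x (V x) (grad \<phi> x) (hess \<phi> x) (I (ext (closure \<Omega>) V) x) \<le> 0)"

definition visc_super where
  "visc_super \<Omega> F I V \<longleftrightarrow> lsc_on (closure \<Omega>) V \<and>
    (\<forall>\<phi> x. C2_nbhd (closure \<Omega>) \<phi> \<longrightarrow> x \<in> closure \<Omega> \<longrightarrow>
       loc_min_rel (closure \<Omega>) (\<lambda>y. V y - \<phi> y) x \<longrightarrow>
       Fupper \<Omega> F x (V x) (grad \<phi> x) (hess \<phi> x) (I (ext (closure \<Omega>) V) x) \<ge> 0)"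

definition visc_sol where
  "visc_sol \<Omega> F I V \<longleftrightarrow> visc_sub \<Omega> F I V \<and> visc_super \<Omega> F I V"

definition comparison_principle where
  "comparison_principle \<Omega> F I \<longleftrightarrow>
    (\<forall>U V. bdd_on (closure \<Omega>) U \<longrightarrow> bdd_on (closure \<Omega>) V \<longrightarrow>
       visc_sub \<Omega> F I U \<longrightarrow> visc_super \<Omega> F I V \<longrightarrow> (\<forall>x\<in>closure \<Omega>. U x \<le> V x))"

definition scheme_monotone where
  "scheme_monotone \<Omega> S \<longleftrightarrow>
    (\<forall>h>0. \<forall>x\<in>closure \<Omega>. \<forall>V W l. bdd_on (closure \<Omega>) V \<longrightarrow> bdd_on (closure \<Omega>) W \<longrightarrow>
       (\<forall>y\<in>closure \<Omega>. V y \<ge> W y) \<longrightarrow> V x = W x \<longrightarrow>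
       S h x (ext (closure \<Omega>) V) l \<le> S h x (ext (closure \<Omega>) W) l)"

definition scheme_solution where
  "scheme_solution \<Omega> S Ih h V \<longleftrightarrow> bdd_on (closure \<Omega>) V \<and>
    (\<forall>x\<in>closure \<Omega>. S h x (ext (closure \<Omega>) V) (Ih h (ext (closure \<Omega>) V) x) = 0)"

definition scheme_stable where
  "scheme_stable \<Omega> S Ih \<longleftrightarrow>
    (\<exists>C. \<forall>h>0. \<forall>V. scheme_solution \<Omega> S Ih h V \<longrightarrow> (\<forall>x\<in>closure \<Omega>. \<bar>V x\<bar> \<le> C))"

definition hr_limsup :: "'n::finite pt set \<Rightarrow> (real \<Rightarrow> 'n pt \<Rightarrow> real) \<Rightarrow> 'n pt \<Rightarrow> ereal" where
  "hr_limsup C u x = Limsup (at_right 0 \<times>\<^sub>F inf (nhds x) (principal C))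
      (\<lambda>(h, y). ereal (u h y))"

definition hr_liminf :: "'n::finite pt set \<Rightarrow> (real \<Rightarrow> 'n pt \<Rightarrow> real) \<Rightarrow> 'n pt \<Rightarrow> ereal" where
  "hr_liminf C u x = Liminf (at_right 0 \<times>\<^sub>F inf (nhds x) (principal C))
      (\<lambda>(h, y). ereal (u h y))"

definition nonlocally_consistent where
  "nonlocally_consistent \<Omega> F I S Ih \<longleftrightarrow>
    (\<forall>u \<phi> x. (\<exists>M. \<forall>h>0. \<forall>y\<in>closure \<Omega>. \<bar>u h y\<bar> \<le> M) \<longrightarrow>
       C2_nbhd (closure \<Omega>) \<phi> \<longrightarrow> x \<in> closure \<Omega> \<longrightarrow>
       (let C = closure \<Omega>;
            G = at_right 0 \<times>\<^sub>F inf (nhds x) (principal C) \<times>\<^sub>F nhds 0;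
            s = (\<lambda>(h, y, \<xi>). ereal (S h y (ext C (\<lambda>z. \<phi> z + \<xi>)) (Ih h (ext C (u h)) y)))
        in Liminf G s \<ge>
             Flower \<Omega> F x (\<phi> x) (grad \<phi> x) (hess \<phi> x)
               (I (ext C (\<lambda>z. real_of_ereal (hr_limsup C u z))) x)
         \<and> Limsup G s \<le>
             Fupper \<Omega> F x (\<phi> x) (grad \<phi> x) (hess \<phi> x)
               (I (ext C (\<lambda>z. real_of_ereal (hr_liminf C u z))) x)))"

definition condition_T where
  "condition_T \<Omega> S \<longleftrightarrow>
    (\<exists>f :: 'n::finite pt \<Rightarrow> real \<Rightarrow> real.
       (\<forall>x h. x \<in> closure \<Omega> \<longrightarrow> h > 0 \<longrightarrow> f x h \<ge> 0) \<and>
       (\<forall>x\<in>closure \<Omega>. ((\<lambda>(y, h). f y h) \<longlongrightarrow> 0)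
            (inf (nhds x) (principal (closure \<Omega>)) \<times>\<^sub>F at_right 0)) \<and>
       (\<forall>h>0. \<forall>x\<in>closure \<Omega>. \<forall>l \<phi>. bdd_on (closure \<Omega>) \<phi> \<longrightarrow>
          (\<forall>\<sigma>\<in>{1, -1}.
             \<bar>S h x (ext (closure \<Omega>) (\<lambda>y. \<phi> y + \<sigma> * exp (-1/h) * (if y = x then 1 else 0))) l
              - S h x (ext (closure \<Omega>) \<phi>) l\<bar> \<le> f x h)))"

end

theory Submission
  imports Defs
begin

text \<open>The argument of Barles and Souganidis. By stability the half-relaxed limits \<open>V\<^sup>*\<close> and
  \<open>V\<^sub>*\<close> of \<open>V\<^sup>h\<close> are bounded. \<open>V\<^sup>*\<close> is a subsolution: if \<open>\<phi>\<close> touches it from above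
  at \<open>x\<close>, a quartic penalty and a cut-off make the maximum of \<open>V\<^sup>* - \<psi>\<close> strict and global;
  then \<open>V\<^sup>h - \<psi>\<close> has near-maximisers \<open>y\<^sub>h \<rightarrow> x\<close> with values \<open>\<xi>\<^sub>h \<rightarrow> 0\<close>. The maximum
  need not be attained, but \<open>\<psi> + \<xi>\<^sub>h\<close> lowered by \<open>exp (-1/h)\<close> at \<open>y\<^sub>h\<close> touches \<open>V\<^sup>h\<close>
  from above there, so monotonicity and the scheme equation bound \<open>S\<close> on it by \<open>0\<close>, and
  condition (T) removes the perturbation; consistency then yields the subsolution
  inequality. Symmetrically \<open>V\<^sub>*\<close> is a supersolution. Comparison gives
  \<open>V\<^sup>* \<le> V\<^sub>*\<close>, so both coincide with the unique solution, which is therefore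
  continuous, and equality of the half-relaxed limits is locally uniform convergence.\<close>

section \<open>\<open>C\<^sup>2\<close> functions with explicit derivatives\<close>

definition outer :: "real^'n \<Rightarrow> real^'n \<Rightarrow> real^'n^'n" where
  "outer a b = (\<chi> i j. a$i * b$j)"

lemma outer_mult_vector: "outer a b *v v = (b \<bullet> v) *\<^sub>R a"
  by (simp add: vec_eq_iff outer_def matrix_vector_mult_def inner_vec_def sum_distrib_left mult_ac)

lemma outer_zero: "outer 0 a = 0" "outer a 0 = 0"
  by (auto simp: outer_def vec_eq_iff)

lemma continuous_on_outer:
  "continuous_on U a \<Longrightarrow> continuous_on U b \<Longrightarrow> continuous_on U (\<lambda>y. outer (a y) (b y))"
  unfolding outer_def by (intro continuous_on_vec_lambda continuous_on_mult continuous_intros)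

lemma linear_axis_expansion:
  fixes L :: "real^'n \<Rightarrow> 'b::real_vector"
  assumes "linear L"
  shows "L v = (\<Sum>i\<in>UNIV. v$i *\<^sub>R L (axis i 1))"
proof -
  have "L v = L (\<Sum>i\<in>UNIV. v$i *\<^sub>R axis i 1)"
    using basis_expansion[of v] by (simp add: scalar_mult_eq_scaleR)
  also have "\<dots> = (\<Sum>i\<in>UNIV. v$i *\<^sub>R L (axis i 1))"
    using assms by (simp add: linear_sum linear_scale)
  finally show ?thesis .
qed

text \<open>Carrying gradient and Hessian explicitly makes the closure rules below compositional.\<close>
definition C2_on :: "'n::finite pt set \<Rightarrow> ('n pt \<Rightarrow> real) \<Rightarrow> ('n pt \<Rightarrow> 'n pt) \<Rightarrow> ('n pt \<Rightarrow> 'n mat) \<Rightarrow> bool" where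
  "C2_on U f g H \<longleftrightarrow>
     (\<forall>y\<in>U. (f has_derivative (\<lambda>v. g y \<bullet> v)) (at y) \<and> (g has_derivative (\<lambda>v. H y *v v)) (at y))
     \<and> continuous_on U H"

lemma C2_on_grad:
  assumes "C2_on U f g H" "y \<in> U"
  shows "grad f y = g y"
proof -
  have "(f has_derivative (\<lambda>v. g y \<bullet> v)) (at y)" using assms by (auto simp: C2_on_def)
  hence "frechet_derivative f (at y) = (\<lambda>v. g y \<bullet> v)" using frechet_derivative_at by metis
  thus ?thesis by (simp add: grad_def vec_eq_iff inner_axis)
qed

lemma C2_on_has_derivative_grad:
  assumes "C2_on U f g H" "open U" "y \<in> U"
  shows "(grad f has_derivative (\<lambda>v. H y *v v)) (at y)"
proof -
  have "(g has_derivative (\<lambda>v. H y *v v)) (at y)" using assms by (auto simp: C2_on_def)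
  thus ?thesis
    by (rule has_derivative_transform_within_open[OF _ assms(2,3)]) (use assms(1) C2_on_grad in metis)
qed

lemma C2_on_hess:
  assumes "C2_on U f g H" "open U" "y \<in> U"
  shows "hess f y = H y"
proof -
  have "frechet_derivative (\<lambda>z. grad f z $ i) (at y) = (\<lambda>v. (H y *v v) $ i)" for i
    using bounded_linear.has_derivative[OF bounded_linear_vec_nth C2_on_has_derivative_grad[OF assms]]
      frechet_derivative_at by metis
  thus ?thesis by (simp add: hess_def vec_eq_iff matrix_vector_mult_basis column_def)
qed

lemma C2_on_imp_C2_nbhd:
  assumes "C2_on U f g H" "open U" "C \<subseteq> U"
  shows "C2_nbhd C f"
  unfolding C2_nbhd_def
proof (intro exI[of _ U] conjI ballI)
  have "continuous_on U H" using assms(1) by (simp add: C2_on_def)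
  thus "continuous_on U (hess f)" by (rule continuous_on_eq) (use assms C2_on_hess in metis)
  fix x assume x: "x \<in> U"
  show "f differentiable at x" using assms x unfolding C2_on_def differentiable_def by blast
  show "grad f differentiable at x"
    using C2_on_has_derivative_grad[OF assms(1,2) x] unfolding differentiable_def by blast
qed (use assms in auto)

lemma C2_nbhd_imp_C2_on:
  assumes "C2_nbhd C f"
  obtains U where "open U" "C \<subseteq> U" "C2_on U f (grad f) (hess f)"
proof -
  obtain U where U: "open U" "C \<subseteq> U" "\<forall>x\<in>U. f differentiable (at x) \<and> grad f differentiable (at x)"
     "continuous_on U (hess f)" using assms unfolding C2_nbhd_def by blast
  have "(f has_derivative (\<lambda>v. grad f y \<bullet> v)) (at y) \<and> (grad f has_derivative (\<lambda>v. hess f y *v v)) (at y)"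
    if y: "y \<in> U" for y
  proof
    have d1: "(f has_derivative frechet_derivative f (at y)) (at y)"
      using U(3) y frechet_derivative_works by blast
    have "frechet_derivative f (at y) v = grad f y \<bullet> v" for v
      using linear_axis_expansion[OF has_derivative_linear[OF d1], of v]
      by (simp add: grad_def inner_vec_def mult.commute)
    thus "(f has_derivative (\<lambda>v. grad f y \<bullet> v)) (at y)" using d1 by presburger
    define D where "D = frechet_derivative (grad f) (at y)"
    have d2: "(grad f has_derivative D) (at y)"
      using U(3) y frechet_derivative_works unfolding D_def by blast
    have "hess f y $ i $ j = D (axis j 1) $ i" for i j
    proof -
      have "((\<lambda>z. grad f z $ i) has_derivative (\<lambda>v. D v $ i)) (at y)"
        using bounded_linear.has_derivative[OF bounded_linear_vec_nth d2] .
      hence "frechet_derivative (\<lambda>z. grad f z $ i) (at y) = (\<lambda>v. D v $ i)"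
        using frechet_derivative_at by metis
      thus ?thesis by (simp add: hess_def)
    qed
    hence "D v = hess f y *v v" for v
      using linear_axis_expansion[OF has_derivative_linear[OF d2], of v]
      by (simp add: vec_eq_iff matrix_vector_mult_def sum_component mult.commute)
    thus "(grad f has_derivative (\<lambda>v. hess f y *v v)) (at y)" using d2 by presburger
  qed
  thus ?thesis using U that unfolding C2_on_def by blast
qed

lemma C2_on_continuous_on:
  assumes "C2_on U f g H"
  shows "continuous_on U f" "continuous_on U g"
  using assms unfolding C2_on_def
  by (meson continuous_at_imp_continuous_on has_derivative_continuous)+

lemma C2_on_const: "C2_on U (\<lambda>y. c) (\<lambda>y. 0) (\<lambda>y. 0)"
proof -
  have "((\<bullet>) (0::'a::finite pt)) = (\<lambda>v. 0)" "((*v) (0::'a mat)) = (\<lambda>v. 0)"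
    by (auto simp: fun_eq_iff)
  thus ?thesis unfolding C2_on_def by (auto intro: has_derivative_const)
qed

lemma C2_on_add:
  assumes "C2_on U f1 g1 H1" "C2_on U f2 g2 H2"
  shows "C2_on U (\<lambda>y. f1 y + f2 y) (\<lambda>y. g1 y + g2 y) (\<lambda>y. H1 y + H2 y)"
  using assms unfolding C2_on_def
  by (auto intro!: has_derivative_add[THEN has_derivative_eq_rhs] continuous_on_add
      simp: inner_add_left matrix_vector_mult_add_rdistrib)

lemma C2_on_uminus:
  assumes "C2_on U f g H"
  shows "C2_on U (\<lambda>y. - f y) (\<lambda>y. - g y) (\<lambda>y. - H y)"
proof -
  have "(- A) *v v = - (A *v v)" for A :: "'a::finite mat" and v
    by (simp add: vec_eq_iff matrix_vector_mult_def sum_negf)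
  thus ?thesis using assms unfolding C2_on_def
    by (auto intro!: has_derivative_minus[THEN has_derivative_eq_rhs] continuous_on_minus)
qed

lemma C2_on_mult:
  assumes "C2_on U f1 g1 H1" "C2_on U f2 g2 H2"
  shows "C2_on U (\<lambda>y. f1 y * f2 y) (\<lambda>y. f1 y *\<^sub>R g2 y + f2 y *\<^sub>R g1 y)
     (\<lambda>y. f1 y *\<^sub>R H2 y + f2 y *\<^sub>R H1 y + outer (g2 y) (g1 y) + outer (g1 y) (g2 y))"
  unfolding C2_on_def
proof (intro conjI ballI)
  fix y assume y: "y \<in> U"
  have d: "(f1 has_derivative (\<lambda>v. g1 y \<bullet> v)) (at y)" "(g1 has_derivative (\<lambda>v. H1 y *v v)) (at y)"
    "(f2 has_derivative (\<lambda>v. g2 y \<bullet> v)) (at y)" "(g2 has_derivative (\<lambda>v. H2 y *v v)) (at y)"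
    using assms y unfolding C2_on_def by auto
  show "((\<lambda>y. f1 y * f2 y) has_derivative (\<lambda>v. (f1 y *\<^sub>R g2 y + f2 y *\<^sub>R g1 y) \<bullet> v)) (at y)"
    by (rule has_derivative_mult[OF d(1,3), THEN has_derivative_eq_rhs])
       (auto simp: inner_add_left algebra_simps)
  show "((\<lambda>y. f1 y *\<^sub>R g2 y + f2 y *\<^sub>R g1 y) has_derivative
     (\<lambda>v. (f1 y *\<^sub>R H2 y + f2 y *\<^sub>R H1 y + outer (g2 y) (g1 y) + outer (g1 y) (g2 y)) *v v)) (at y)"
    by (rule has_derivative_add[OF has_derivative_scaleR[OF d(1,4)] has_derivative_scaleR[OF d(3,2)],
          THEN has_derivative_eq_rhs])
       (auto simp: outer_mult_vector scaleR_matrix_vector_assoc[symmetric] algebra_simps)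
next
  show "continuous_on U (\<lambda>y. f1 y *\<^sub>R H2 y + f2 y *\<^sub>R H1 y + outer (g2 y) (g1 y) + outer (g1 y) (g2 y))"
    using assms C2_on_continuous_on[OF assms(1)] C2_on_continuous_on[OF assms(2)] unfolding C2_on_def
    by (intro continuous_on_add continuous_on_scaleR continuous_on_outer) auto
qed

lemma C2_on_compose:
  assumes "C2_on U f g H"
    and w: "\<And>t. (w has_real_derivative w' t) (at t)" "\<And>t. (w' has_real_derivative w'' t) (at t)"
    and w'': "continuous_on UNIV w''"
  shows "C2_on U (\<lambda>y. w (f y)) (\<lambda>y. w' (f y) *\<^sub>R g y) (\<lambda>y. w' (f y) *\<^sub>R H y + w'' (f y) *\<^sub>R outer (g y) (g y))"
  unfolding C2_on_def
proof (intro conjI ballI)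
  fix y assume y: "y \<in> U"
  have d: "(f has_derivative (\<lambda>v. g y \<bullet> v)) (at y)" "(g has_derivative (\<lambda>v. H y *v v)) (at y)"
    using assms y unfolding C2_on_def by auto
  have wd: "(w has_derivative (*) (w' t)) (at t)" "(w' has_derivative (*) (w'' t)) (at t)" for t
    using w[of t] by (simp_all add: has_field_derivative_def)
  show "((\<lambda>y. w (f y)) has_derivative (\<lambda>v. (w' (f y) *\<^sub>R g y) \<bullet> v)) (at y)"
    by (rule has_derivative_compose[OF d(1) wd(1), THEN has_derivative_eq_rhs]) auto
  show "((\<lambda>y. w' (f y) *\<^sub>R g y) has_derivative (\<lambda>v. (w' (f y) *\<^sub>R H y + w'' (f y) *\<^sub>R outer (g y) (g y)) *v v)) (at y)"
    by (rule has_derivative_scaleR[OF has_derivative_compose[OF d(1) wd(2)] d(2), THEN has_derivative_eq_rhs])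
       (auto simp: outer_mult_vector scaleR_matrix_vector_assoc[symmetric] algebra_simps)
next
  have "continuous_on UNIV w'" using w(2) by (meson DERIV_isCont continuous_at_imp_continuous_on)
  thus "continuous_on U (\<lambda>y. w' (f y) *\<^sub>R H y + w'' (f y) *\<^sub>R outer (g y) (g y))"
    using assms C2_on_continuous_on[OF assms(1)] unfolding C2_on_def
    by (intro continuous_on_add continuous_on_scaleR continuous_on_outer
        continuous_on_compose2[OF \<open>continuous_on UNIV w'\<close>] continuous_on_compose2[OF w'']) auto
qed

lemma C2_on_dist_sq: "C2_on U (\<lambda>z. (z - x) \<bullet> (z - x)) (\<lambda>z. 2 *\<^sub>R (z - x)) (\<lambda>z. 2 *\<^sub>R mat 1)"
  unfolding C2_on_def
proof (intro conjI ballI)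
  fix y
  show "((\<lambda>z. (z - x) \<bullet> (z - x)) has_derivative (\<lambda>v. (2 *\<^sub>R (y - x)) \<bullet> v)) (at y)"
    by (auto intro!: derivative_eq_intros simp: inner_commute algebra_simps)
  show "((\<lambda>z. 2 *\<^sub>R (z - x)) has_derivative (\<lambda>v. (2 *\<^sub>R mat 1) *v v)) (at y)"
    by (auto intro!: derivative_eq_intros simp: scaleR_matrix_vector_assoc[symmetric])
qed (auto intro: continuous_on_const)

lemma C2_nbhd_uminus:
  assumes "C2_nbhd C f" "x \<in> C"
  shows "C2_nbhd C (\<lambda>y. - f y)" "grad (\<lambda>y. - f y) x = - grad f x" "hess (\<lambda>y. - f y) x = - hess f x"
proof -
  obtain U where U: "open U" "C \<subseteq> U" "C2_on U f (grad f) (hess f)"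
    using C2_nbhd_imp_C2_on[OF assms(1)] by blast
  note N = C2_on_uminus[OF U(3)]
  show "C2_nbhd C (\<lambda>y. - f y)" "grad (\<lambda>y. - f y) x = - grad f x" "hess (\<lambda>y. - f y) x = - hess f x"
    using C2_on_imp_C2_nbhd[OF N U(1,2)] C2_on_grad[OF N] C2_on_hess[OF N U(1)] U(2) assms(2) by auto
qed

lemma C2_nbhd_imp_continuous_on: "C2_nbhd C f \<Longrightarrow> continuous_on C f"
  by (meson C2_nbhd_imp_C2_on C2_on_continuous_on(1) continuous_on_subset)

lemma has_real_derivative_truncate_at_1:
  fixes p p' :: "real \<Rightarrow> real"
  assumes d: "\<And>t. (p has_real_derivative p' t) (at t)" and "p 1 = 0" "p' 1 = 0"
  shows "((\<lambda>t. if t \<le> 1 then p t else 0) has_real_derivative (if t \<le> 1 then p' t else 0)) (at t)"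
proof -
  have cl: "closure {..1::real} = {..1}" "closure {(1::real)<..} = {1..}" by simp_all
  have "((\<lambda>s. if s \<in> {..1} then p s else 0) has_derivative
      (if t \<in> {..1} then (*) (p' t) else (*) 0)) (at t within ({..1} \<union> {1<..}))"
  proof (rule has_derivative_If_within_closures[where g = "\<lambda>_. 0"])
    fix s
    have "(p has_derivative (*) (p' s)) (at s)"
      using d[of s] by (simp add: has_field_derivative_def)
    thus "(p has_derivative (*) (p' s)) (at s within {..1} \<union> (closure {..1} \<inter> closure {1<..}))"
      by (rule has_derivative_at_withinI)
    have "(*) (0::real) = (\<lambda>h. 0)" by auto
    thus "((\<lambda>x. 0) has_derivative (*) 0) (at s within {1<..} \<union> (closure {..1} \<inter> closure {1<..}))"
      by (simp only: has_derivative_const)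
    show "s \<in> closure {..1} \<Longrightarrow> s \<in> closure {1<..} \<Longrightarrow> p s = 0"
         "s \<in> closure {..1} \<Longrightarrow> s \<in> closure {1<..} \<Longrightarrow> (*) (p' s) = (*) 0"
      unfolding cl using assms(2,3) by auto
  qed auto
  moreover have "{..1} \<union> {1<..} = (UNIV::real set)" by auto
  moreover have "(\<lambda>s. if s \<in> {..1} then p s else 0) = (\<lambda>s. if s \<le> 1 then p s else 0)" by auto
  moreover have "(if t \<in> {..1} then (*) (p' t) else (*) 0) = (*) (if t \<le> 1 then p' t else 0)"
    by (auto simp: fun_eq_iff)
  ultimately show ?thesis by (simp add: has_field_derivative_def)
qed

definition bump :: "real \<Rightarrow> real" where "bump t = (if t \<le> 1 then (1 - t)^3 * (1 + 3*t) else 0)"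
definition bump' :: "real \<Rightarrow> real" where "bump' t = (if t \<le> 1 then -12 * t * (1 - t)^2 else 0)"
definition bump'' :: "real \<Rightarrow> real" where "bump'' t = (if t \<le> 1 then -12 * (1 - t) * (1 - 3*t) else 0)"

lemma bump_has_real_derivative: "(bump has_real_derivative bump' t) (at t)"
  unfolding bump_def bump'_def
proof (rule has_real_derivative_truncate_at_1)
  show "((\<lambda>t. (1 - t)^3 * (1 + 3*t)) has_real_derivative -12 * t * (1 - t)^2) (at t)" for t
    by (rule derivative_eq_intros refl | simp)+ (simp add: power2_eq_square power3_eq_cube algebra_simps)
qed auto

lemma bump'_has_real_derivative: "(bump' has_real_derivative bump'' t) (at t)"
  unfolding bump'_def bump''_def
proof (rule has_real_derivative_truncate_at_1)
  show "((\<lambda>t. -12 * t * (1 - t)^2) has_real_derivative -12 * (1 - t) * (1 - 3*t)) (at t)" for t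
    by (rule derivative_eq_intros refl | simp)+ (simp add: power2_eq_square algebra_simps)
qed auto

lemma continuous_on_bump'': "continuous_on UNIV bump''"
  unfolding bump''_def
  by (rule continuous_on_cases_le[where h = "\<lambda>t. t"]; (intro continuous_intros)?; simp)

lemma bump_range:
  assumes "0 \<le> t"
  shows "0 \<le> bump t \<and> bump t \<le> 1"
proof (cases "t \<le> 1")
  case True
  have "(1 - t)^3 * (1 + 3*t) = 1 - t^2 * (3 * (t - 4/3)^2 + 2/3)"
    by (simp add: power2_eq_square power3_eq_cube algebra_simps)
  moreover have "0 \<le> t^2 * (3 * (t - 4/3)^2 + 2/3)" by simp
  moreover have "0 \<le> (1 - t)^3 * (1 + 3*t)"
    using True assms by (intro mult_nonneg_nonneg zero_le_power) auto
  moreover have "bump t = (1 - t)^3 * (1 + 3*t)" using True by (simp add: bump_def)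
  ultimately show ?thesis by linarith
qed (simp add: bump_def)

lemma bump_blend:
  fixes \<phi> :: "'n::finite pt \<Rightarrow> real" and a c K :: real
  assumes "C2_nbhd C \<phi>" "x \<in> C"
  defines "\<psi> \<equiv> \<lambda>y. K + bump (a * ((y - x) \<bullet> (y - x))) * (\<phi> y + c + ((y - x) \<bullet> (y - x))^2 - K)"
  shows "C2_nbhd C \<psi>" "\<psi> x = \<phi> x + c" "grad \<psi> x = grad \<phi> x" "hess \<psi> x = hess \<phi> x"
proof -
  obtain U where U: "open U" "C \<subseteq> U" "C2_on U \<phi> (grad \<phi>) (hess \<phi>)"
    using C2_nbhd_imp_C2_on[OF assms(1)] by blast
  note sq = C2_on_dist_sq[of U x]
  note blend = C2_on_add[OF C2_on_const[of U K]
      C2_on_mult[OF C2_on_compose[OF C2_on_mult[OF C2_on_const[of U a] sq]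
          bump_has_real_derivative bump'_has_real_derivative continuous_on_bump'']
        C2_on_add[OF C2_on_add[OF C2_on_add[OF U(3) C2_on_const[of U c]] C2_on_mult[OF sq sq]]
          C2_on_const[of U "-K"]]]]
  have e: "\<psi> = (\<lambda>y. K + bump (a * ((y - x) \<bullet> (y - x))) *
      (\<phi> y + c + ((y - x) \<bullet> (y - x)) * ((y - x) \<bullet> (y - x)) + - K))"
    by (simp add: \<psi>_def power2_eq_square)
  have bx: "bump 0 = 1" "bump' 0 = 0" by (simp_all add: bump_def bump'_def)
  have xU: "x \<in> U" using U assms(2) by blast
  show "C2_nbhd C \<psi>" unfolding e by (rule C2_on_imp_C2_nbhd[OF blend U(1,2)])
  show "grad \<psi> x = grad \<phi> x" unfolding e C2_on_grad[OF blend xU] by (simp add: bx)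
  show "hess \<psi> x = hess \<phi> x" unfolding e C2_on_hess[OF blend U(1) xU] by (simp add: bx outer_zero)
  show "\<psi> x = \<phi> x + c" by (simp add: \<psi>_def bx)
qed

section \<open>Strict test functions\<close>

lemma interpolation_bounds:
  fixes t q A K :: real
  assumes "0 \<le> t \<and> t \<le> 1" "\<bar>q\<bar> \<le> A" "A \<le> K"
  shows "q \<le> K + t * (q - K)" "\<bar>K + t * (q - K)\<bar> \<le> 2 * K + A"
proof -
  have "0 \<le> (1 - t) * (K - q)" using assms by (intro mult_nonneg_nonneg) auto
  thus "q \<le> K + t * (q - K)" by (simp add: algebra_simps)
  have "\<bar>t * (q - K)\<bar> \<le> \<bar>q - K\<bar>" using assms(1) by (simp add: abs_mult mult_left_le_one_le)
  thus "\<bar>K + t * (q - K)\<bar> \<le> 2 * K + A" using assms(2,3) by arith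
qed

text \<open>\<open>\<psi>\<close> interpolates, through \<open>bump (|y - x|\<^sup>2 / \<rho>\<^sup>2)\<close>, between \<open>\<phi> + (U x - \<phi> x) + |y - x|\<^sup>4\<close>
  near \<open>x\<close> and a constant \<open>K \<ge> B + 2\<close> away from \<open>x\<close>.\<close>
lemma strict_touching_test_function:
  fixes \<phi> U :: "'n::finite pt \<Rightarrow> real"
  assumes \<phi>: "C2_nbhd C \<phi>" and C: "closed C" and x: "x \<in> C"
    and max: "loc_max_rel C (\<lambda>y. U y - \<phi> y) x"
    and U_bdd: "\<forall>y\<in>C. \<bar>U y\<bar> \<le> B"
  obtains \<psi> \<rho> where "C2_nbhd C \<psi>" "bdd_on C \<psi>" "continuous_on C \<psi>"
    "\<psi> x = U x" "grad \<psi> x = grad \<phi> x" "hess \<psi> x = hess \<phi> x"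
    "\<forall>y\<in>C. U y - \<psi> y \<le> - min (norm (y - x) ^ 4) 1"
    "\<rho> > 0" "\<forall>y\<in>C. \<rho> \<le> dist y x \<longrightarrow> B + 1 \<le> \<psi> y"
proof -
  obtain e where e: "e > 0" "\<forall>y\<in>C \<inter> ball x e. U y - \<phi> y \<le> U x - \<phi> x"
    using max unfolding loc_max_rel_def by blast
  define \<rho> where "\<rho> = e / 2"
  have \<rho>: "\<rho> > 0" "\<rho> < e" using e by (auto simp: \<rho>_def)
  define c where "c = U x - \<phi> x"
  define q where "q = (\<lambda>y. \<phi> y + c + norm (y - x) ^ 4)"
  have "continuous_on C q"
    unfolding q_def by (intro continuous_intros C2_nbhd_imp_continuous_on[OF \<phi>])
  hence "compact (q ` (C \<inter> cball x \<rho>))"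
    using C by (intro compact_continuous_image) (auto intro: continuous_on_subset closed_Int_compact)
  then obtain A where A: "\<forall>y\<in>C \<inter> cball x \<rho>. \<bar>q y\<bar> \<le> A"
    by (metis compact_imp_bounded bounded_real image_eqI)
  have A0: "0 \<le> A" using A x \<rho> by force
  define K where "K = max A (B + 2)"
  have K: "A \<le> K" "B + 2 \<le> K" "0 \<le> K" using A0 by (auto simp: K_def)
  define \<psi> where "\<psi> = (\<lambda>y. K + bump (1 / \<rho>^2 * ((y - x) \<bullet> (y - x))) * (\<phi> y + c + ((y - x) \<bullet> (y - x))^2 - K))"
  have sq: "((y - x) \<bullet> (y - x))^2 = norm (y - x) ^ 4" for y
    by (simp add: power2_norm_eq_inner[symmetric] power_mult[symmetric])
  have \<psi>_q: "\<psi> y = K + bump (norm (y - x)^2 / \<rho>^2) * (q y - K)" for y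
    by (simp add: \<psi>_def q_def sq power2_norm_eq_inner)
  have far: "\<psi> y = K" if "\<rho> \<le> dist y x" for y
  proof -
    have "\<rho>^2 \<le> norm (y - x)^2" using that \<rho> by (simp add: dist_norm power_mono)
    thus ?thesis using \<rho> by (simp add: \<psi>_q bump_def)
  qed
  have near: "q y \<le> \<psi> y \<and> \<bar>\<psi> y\<bar> \<le> 2 * K + A" if "y \<in> C" "dist y x < \<rho>" for y
    using interpolation_bounds[OF bump_range[of "norm (y - x)^2 / \<rho>^2"], of "q y" A K] A that K(1)
    unfolding \<psi>_q by (auto simp: dist_commute)
  obtain C2: "C2_nbhd C \<psi>" and at_x: "\<psi> x = \<phi> x + c" "grad \<psi> x = grad \<phi> x" "hess \<psi> x = hess \<phi> x"
    using bump_blend[OF \<phi> x] unfolding \<psi>_def by blast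
  show ?thesis
  proof
    show "C2_nbhd C \<psi>" "grad \<psi> x = grad \<phi> x" "hess \<psi> x = hess \<phi> x" by (fact C2 at_x(2,3))+
    show "continuous_on C \<psi>" by (rule C2_nbhd_imp_continuous_on[OF C2])
    show "\<psi> x = U x" using at_x(1) by (simp add: c_def)
    have "\<bar>\<psi> y\<bar> \<le> 2 * K + A" if "y \<in> C" for y
      using near[OF that] far[of y] K A0 by (cases "dist y x < \<rho>") auto
    thus "bdd_on C \<psi>" unfolding bdd_on_def by blast
    show "\<forall>y\<in>C. U y - \<psi> y \<le> - min (norm (y - x) ^ 4) 1"
    proof
      fix y assume y: "y \<in> C"
      show "U y - \<psi> y \<le> - min (norm (y - x) ^ 4) 1"
      proof (cases "dist y x < \<rho>")
        case True
        have "U y - \<phi> y \<le> c" using e(2) y True \<rho> by (auto simp: c_def dist_commute)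
        thus ?thesis using near[OF y True] unfolding q_def by linarith
      next
        case False thus ?thesis using far[of y] U_bdd y K by force
      qed
    qed
    show "\<rho> > 0" by (fact \<rho>(1))
    show "\<forall>y\<in>C. \<rho> \<le> dist y x \<longrightarrow> B + 1 \<le> \<psi> y" using far K by simp
  qed
qed

section \<open>Half-relaxed limits\<close>

lemma inf_nhds_principal_neq_bot: "x \<in> C \<Longrightarrow> inf (nhds x) (principal C) \<noteq> bot"
proof
  assume x: "x \<in> C" and "inf (nhds x) (principal C) = bot"
  hence "eventually (\<lambda>_. False) (inf (nhds x) (principal C))" by simp
  hence "eventually (\<lambda>y. y \<in> C \<longrightarrow> False) (nhds x)" by (simp add: eventually_inf_principal)
  thus False using x eventually_nhds_x_imp_x by fastforce
qed

lemma relaxed_filter_neq_bot: "x \<in> C \<Longrightarrow> at_right (0::real) \<times>\<^sub>F inf (nhds x) (principal C) \<noteq> bot"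
  using inf_nhds_principal_neq_bot by (simp add: prod_filter_eq_bot)

lemma Liminf_le_if_frequently:
  fixes s :: "'a \<Rightarrow> ereal"
  assumes "frequently (\<lambda>p. s p \<le> c) F"
  shows "Liminf F s \<le> c"
proof (rule ccontr)
  assume "\<not> Liminf F s \<le> c"
  hence "eventually (\<lambda>p. c < s p) F" by (intro less_LiminfD) simp
  hence "\<not> frequently (\<lambda>p. s p \<le> c) F" by (simp add: not_frequently not_le)
  thus False using assms by contradiction
qed

lemma Limsup_ge_if_frequently:
  fixes s :: "'a \<Rightarrow> ereal"
  assumes "frequently (\<lambda>p. c \<le> s p) F"
  shows "c \<le> Limsup F s"
proof (rule ccontr)
  assume "\<not> c \<le> Limsup F s"
  hence "eventually (\<lambda>p. s p < c) F" by (intro Limsup_lessD) simp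
  hence "\<not> frequently (\<lambda>p. c \<le> s p) F" by (simp add: not_frequently not_le)
  thus False using assms by contradiction
qed

lemma less_Limsup_imp_frequently:
  fixes s :: "'a \<Rightarrow> ereal"
  assumes "c < Limsup F s"
  shows "frequently (\<lambda>p. c < s p) F"
proof (rule ccontr)
  assume "\<not> frequently (\<lambda>p. c < s p) F"
  hence "eventually (\<lambda>p. s p \<le> c) F" by (simp add: not_frequently not_less)
  hence "Limsup F s \<le> c" by (rule Limsup_bounded)
  thus False using assms by simp
qed

lemma lsc_on_uminus_iff: "lsc_on C (\<lambda>z. - V z) \<longleftrightarrow> usc_on C V"
proof -
  have "lsc_env C (\<lambda>z. - V z) z = - usc_env C V z" for z
    unfolding lsc_env_def usc_env_def using ereal_Liminf_uminus[of _ "\<lambda>y. ereal (V y)"] by simp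
  moreover have "ereal (- a) \<le> - b \<longleftrightarrow> b \<le> ereal a" for a and b :: ereal
    by (cases b) auto
  ultimately show ?thesis unfolding lsc_on_def usc_on_def by simp
qed

lemma lsc_on_eventually_greater:
  assumes "lsc_on C V" "z \<in> C" "d > 0"
  shows "eventually (\<lambda>y. V z - d < V y) (inf (nhds z) (principal C))"
proof -
  have "ereal (V z - d) < ereal (V z)" using assms(3) by simp
  also have "\<dots> \<le> lsc_env C V z" using assms(1,2) unfolding lsc_on_def by blast
  finally have "ereal (V z - d) < lsc_env C V z" .
  thus ?thesis unfolding lsc_env_def by (auto dest: less_LiminfD)
qed

lemma continuous_on_eventually_dist_less:
  fixes V :: "'a::metric_space \<Rightarrow> real"
  assumes "continuous_on C V" "z \<in> C" "e > 0"
  shows "eventually (\<lambda>y. dist (V y) (V z) < e) (inf (nhds z) (principal C))"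
proof -
  obtain r where "r > 0" "\<forall>y\<in>C. dist y z < r \<longrightarrow> dist (V y) (V z) < e"
    using assms unfolding continuous_on_iff by blast
  thus ?thesis unfolding eventually_inf_principal eventually_nhds_metric by blast
qed

lemma continuous_on_imp_lsc_on:
  fixes V :: "'a::metric_space \<Rightarrow> real"
  assumes "continuous_on C V"
  shows "lsc_on C V"
  unfolding lsc_on_def lsc_env_def
proof
  fix z assume z: "z \<in> C"
  have "((\<lambda>y. ereal (V y)) \<longlongrightarrow> ereal (V z)) (inf (nhds z) (principal C))"
    using continuous_on_eventually_dist_less[OF assms z] by (intro tendsto_ereal tendstoI)
  hence "Liminf (inf (nhds z) (principal C)) (\<lambda>y. ereal (V y)) = ereal (V z)"
    by (rule lim_imp_Liminf[OF inf_nhds_principal_neq_bot[OF z]])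
  thus "ereal (V z) \<le> Liminf (inf (nhds z) (principal C)) (\<lambda>y. ereal (V y))" by simp
qed

definition upper_relaxed_limit :: "'n::finite pt set \<Rightarrow> (real \<Rightarrow> 'n pt \<Rightarrow> real) \<Rightarrow> 'n pt \<Rightarrow> real" where
  "upper_relaxed_limit C u z = real_of_ereal (hr_limsup C u z)"

definition lower_relaxed_limit :: "'n::finite pt set \<Rightarrow> (real \<Rightarrow> 'n pt \<Rightarrow> real) \<Rightarrow> 'n pt \<Rightarrow> real" where
  "lower_relaxed_limit C u z = real_of_ereal (hr_liminf C u z)"

lemma hr_limits_bounded:
  assumes B: "\<forall>h>0. \<forall>y\<in>C. \<bar>u h y\<bar> \<le> B" and x: "x \<in> C"
  shows "ereal (-B) \<le> hr_liminf C u x" "hr_liminf C u x \<le> hr_limsup C u x" "hr_limsup C u x \<le> ereal B"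
proof -
  let ?F = "at_right (0::real) \<times>\<^sub>F inf (nhds x) (principal C)"
  have "eventually (\<lambda>p. 0 < fst p \<and> snd p \<in> C) ?F"
    by (intro eventually_prodI[OF eventually_at_right_less]) (simp add: eventually_inf_principal)
  hence "eventually (\<lambda>p. \<bar>u (fst p) (snd p)\<bar> \<le> B) ?F"
    by (rule eventually_mono) (use B in auto)
  hence ev: "eventually (\<lambda>(h, y). ereal (-B) \<le> ereal (u h y) \<and> ereal (u h y) \<le> ereal B) ?F"
    by (rule eventually_mono) (auto simp: abs_le_iff split: prod.splits)
  show "ereal (-B) \<le> hr_liminf C u x" unfolding hr_liminf_def
    by (rule Liminf_bounded) (rule eventually_mono[OF ev], auto)
  show "hr_liminf C u x \<le> hr_limsup C u x" unfolding hr_liminf_def hr_limsup_def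
    by (rule Liminf_le_Limsup[OF relaxed_filter_neq_bot[OF x]])
  show "hr_limsup C u x \<le> ereal B" unfolding hr_limsup_def
    by (rule Limsup_bounded) (rule eventually_mono[OF ev], auto)
qed

lemma relaxed_limits_real:
  assumes B: "\<forall>h>0. \<forall>y\<in>C. \<bar>u h y\<bar> \<le> B" and x: "x \<in> C"
  shows "hr_limsup C u x = ereal (upper_relaxed_limit C u x)" "\<bar>upper_relaxed_limit C u x\<bar> \<le> B"
    "hr_liminf C u x = ereal (lower_relaxed_limit C u x)" "\<bar>lower_relaxed_limit C u x\<bar> \<le> B"
proof -
  have real: "X = ereal (real_of_ereal X) \<and> \<bar>real_of_ereal X\<bar> \<le> B"
    if "ereal (-B) \<le> X" "X \<le> ereal B" for X
    using that by (cases X) auto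
  show "hr_limsup C u x = ereal (upper_relaxed_limit C u x)" "\<bar>upper_relaxed_limit C u x\<bar> \<le> B"
    "hr_liminf C u x = ereal (lower_relaxed_limit C u x)" "\<bar>lower_relaxed_limit C u x\<bar> \<le> B"
    using real[of "hr_limsup C u x"] real[of "hr_liminf C u x"] hr_limits_bounded[OF assms]
    unfolding upper_relaxed_limit_def lower_relaxed_limit_def by (meson order_trans)+
qed

lemma hr_limsup_uminus: "hr_limsup C (\<lambda>h y. - u h y) x = - hr_liminf C u x"
proof -
  have "(\<lambda>(h, y). ereal (- u h y)) = (\<lambda>p. - (\<lambda>(h, y). ereal (u h y)) p)" by auto
  thus ?thesis unfolding hr_limsup_def hr_liminf_def by (simp add: ereal_Limsup_uminus)
qed

lemma upper_relaxed_limit_uminus: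
  "upper_relaxed_limit C (\<lambda>h y. - u h y) = (\<lambda>z. - lower_relaxed_limit C u z)"
  by (simp add: fun_eq_iff upper_relaxed_limit_def lower_relaxed_limit_def hr_limsup_uminus)

lemma hr_limsup_less_imp_eventually:
  assumes "hr_limsup C u z < ereal a"
  obtains S where "open S" "z \<in> S" "eventually (\<lambda>h. \<forall>y\<in>S \<inter> C. u h y < a) (at_right 0)"
proof -
  have "eventually (\<lambda>(h, y). ereal (u h y) < ereal a) (at_right (0::real) \<times>\<^sub>F inf (nhds z) (principal C))"
    using Limsup_lessD[OF assms[unfolded hr_limsup_def]] by (simp add: case_prod_beta')
  then obtain Pf Pg where P: "eventually Pf (at_right 0)" "eventually Pg (inf (nhds z) (principal C))"
    "\<forall>h y. Pf h \<longrightarrow> Pg y \<longrightarrow> u h y < a"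
    unfolding eventually_prod_filter by auto
  obtain S where S: "open S" "z \<in> S" "\<forall>y\<in>S. y \<in> C \<longrightarrow> Pg y"
    using P(2) unfolding eventually_inf_principal eventually_nhds by blast
  have "eventually (\<lambda>h. \<forall>y\<in>S \<inter> C. u h y < a) (at_right 0)"
    by (rule eventually_mono[OF P(1)]) (use S P(3) in blast)
  thus ?thesis using S that by blast
qed

lemma usc_on_upper_relaxed_limit:
  assumes B: "\<forall>h>0. \<forall>y\<in>C. \<bar>u h y\<bar> \<le> B"
  shows "usc_on C (upper_relaxed_limit C u)"
  unfolding usc_on_def usc_env_def
proof (intro ballI, rule ereal_le_epsilon2)
  fix z r assume z: "z \<in> C" and r: "(0::real) < r"
  let ?V = "upper_relaxed_limit C u"
  have "hr_limsup C u z < ereal (?V z + r)" using relaxed_limits_real(1)[OF B z] r by simp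
  then obtain S where S: "open S" "z \<in> S" "eventually (\<lambda>h. \<forall>y\<in>S \<inter> C. u h y < ?V z + r) (at_right 0)"
    by (rule hr_limsup_less_imp_eventually)
  have "?V y \<le> ?V z + r" if y: "y \<in> S" "y \<in> C" for y
  proof -
    have "eventually (\<lambda>y'. y' \<in> S \<and> y' \<in> C) (inf (nhds y) (principal C))"
      unfolding eventually_inf_principal eventually_nhds using S y by blast
    hence "hr_limsup C u y \<le> ereal (?V z + r)" unfolding hr_limsup_def
      by (rule Limsup_bounded[OF eventually_mono[OF eventually_prodI[OF S(3)]]]) (auto simp: less_imp_le)
    thus ?thesis using relaxed_limits_real(1)[OF B y(2)] by simp
  qed
  hence "eventually (\<lambda>y. ereal (?V y) \<le> ereal (?V z + r)) (inf (nhds z) (principal C))"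
    unfolding eventually_inf_principal eventually_nhds using S by auto
  thus "Limsup (inf (nhds z) (principal C)) (\<lambda>y. ereal (?V y)) \<le> ereal (?V z) + ereal r"
    by (simp add: Limsup_bounded)
qed

lemma lsc_on_lower_relaxed_limit:
  assumes B: "\<forall>h>0. \<forall>y\<in>C. \<bar>u h y\<bar> \<le> B"
  shows "lsc_on C (lower_relaxed_limit C u)"
proof -
  have "usc_on C (upper_relaxed_limit C (\<lambda>h y. - u h y))"
    using B by (intro usc_on_upper_relaxed_limit[of _ _ B]) simp
  thus ?thesis by (simp add: upper_relaxed_limit_uminus lsc_on_uminus_iff[symmetric])
qed

lemma eventually_below_on_compact:
  assumes K: "compact K" "K \<subseteq> C" and \<psi>: "lsc_on C \<psi>"
    and less: "\<forall>z\<in>K. hr_limsup C u z < ereal (\<psi> z + c)"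
  shows "eventually (\<lambda>h. \<forall>y\<in>K. u h y - \<psi> y < c) (at_right 0)"
proof -
  have local: "\<exists>T. open T \<and> z \<in> T \<and> eventually (\<lambda>h. \<forall>y\<in>T \<inter> C. u h y - \<psi> y < c) (at_right 0)"
    if z: "z \<in> K" for z
  proof -
    obtain a where a: "hr_limsup C u z < ereal a" "a < \<psi> z + c"
      using ereal_dense2[OF less[rule_format, OF z]] by auto
    obtain S where S: "open S" "z \<in> S" "eventually (\<lambda>h. \<forall>y\<in>S \<inter> C. u h y < a) (at_right 0)"
      by (rule hr_limsup_less_imp_eventually[OF a(1)])
    have "eventually (\<lambda>y. \<psi> z - (\<psi> z + c - a) < \<psi> y) (inf (nhds z) (principal C))"
      using a z K by (intro lsc_on_eventually_greater[OF \<psi>]) auto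
    then obtain S' where S': "open S'" "z \<in> S'" "\<forall>y\<in>S'. y \<in> C \<longrightarrow> a - c < \<psi> y"
      unfolding eventually_inf_principal eventually_nhds by auto
    have "eventually (\<lambda>h. \<forall>y\<in>(S \<inter> S') \<inter> C. u h y - \<psi> y < c) (at_right 0)"
    proof (rule eventually_mono[OF S(3)], intro ballI)
      fix h y assume "\<forall>y\<in>S \<inter> C. u h y < a" "y \<in> (S \<inter> S') \<inter> C"
      hence "u h y < a" "a - c < \<psi> y" using S'(3) by auto
      thus "u h y - \<psi> y < c" by linarith
    qed
    thus ?thesis using S S' by (intro exI[of _ "S \<inter> S'"]) auto
  qed
  have "\<exists>T. \<forall>z\<in>K. open (T z) \<and> z \<in> T z \<and>
      eventually (\<lambda>h. \<forall>y\<in>T z \<inter> C. u h y - \<psi> y < c) (at_right 0)"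
    by (intro bchoice ballI local)
  then obtain T where T: "\<forall>z\<in>K. open (T z) \<and> z \<in> T z \<and>
      eventually (\<lambda>h. \<forall>y\<in>T z \<inter> C. u h y - \<psi> y < c) (at_right 0)" ..
  obtain Fs where Fs: "Fs \<subseteq> K" "finite Fs" "K \<subseteq> (\<Union>z\<in>Fs. T z)"
    using compactE_image[OF K(1), of K T] T by blast
  have "eventually (\<lambda>h. \<forall>z\<in>Fs. \<forall>y\<in>T z \<inter> C. u h y - \<psi> y < c) (at_right 0)"
    using Fs T by (intro eventually_ball_finite) auto
  thus ?thesis by (rule eventually_mono) (use Fs K in blast)
qed

section \<open>Near-maximisers of \<open>V\<^sup>h - \<psi>\<close>\<close>

lemma near_maximiser:
  fixes g :: "'a \<Rightarrow> real"
  assumes "C \<noteq> {}" "bdd_above (g ` C)" "0 < e"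
  obtains y where "y \<in> C" "\<forall>z\<in>C. g z < g y + e"
proof -
  have "(SUP z\<in>C. g z) - e < (SUP z\<in>C. g z)" using assms(3) by simp
  then obtain y where "y \<in> C" "(SUP z\<in>C. g z) - e < g y" using less_cSUP_iff[OF assms(1,2)] by blast
  moreover have "g z \<le> (SUP z\<in>C. g z)" if "z \<in> C" for z by (rule cSUP_upper[OF that assms(2)])
  ultimately show ?thesis using that by force
qed

lemma exp_minus_inverse_le: "0 < h \<Longrightarrow> exp (- 1 / h) \<le> (h::real)"
proof -
  assume h: "0 < h"
  have "1 / h \<le> exp (1 / h)" using exp_ge_add_one_self[of "1 / h"] by linarith
  hence "inverse (exp (1 / h)) \<le> inverse (1 / h)" using h by (intro le_imp_inverse_le) auto
  thus ?thesis using h by (simp add: exp_minus)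
qed

context
  fixes C :: "'n::finite pt set" and u :: "real \<Rightarrow> 'n pt \<Rightarrow> real" and \<psi> :: "'n pt \<Rightarrow> real"
    and x :: "'n pt" and B \<rho> :: real
  assumes closed: "closed C" and x: "x \<in> C"
    and bounded: "\<forall>h>0. \<forall>y\<in>C. \<bar>u h y\<bar> \<le> B"
    and \<psi>_cont: "continuous_on C \<psi>"
    and touch: "hr_limsup C u x = ereal (\<psi> x)"
    and strict: "\<forall>z\<in>C. hr_limsup C u z \<le> ereal (\<psi> z - min (norm (z - x) ^ 4) 1)"
    and \<rho>: "\<rho> > 0" and far: "\<forall>y\<in>C. \<rho> \<le> dist y x \<longrightarrow> B + 1 \<le> \<psi> y"
begin

lemma below_test_function_far:
  assumes "0 < h" "y \<in> C" "\<rho> \<le> dist y x"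
  shows "u h y - \<psi> y \<le> -1"
proof -
  have "u h y \<le> B" using bounded assms(1,2) by (simp add: abs_le_iff)
  moreover have "B + 1 \<le> \<psi> y" using far assms(2,3) by blast
  ultimately show ?thesis by linarith
qed

lemma eventually_below_test_function_from_cball:
  assumes "\<forall>z\<in>C \<inter> cball x \<rho>. hr_limsup C u z < ereal (\<psi> z + c)" "-1 < c"
  shows "eventually (\<lambda>h. \<forall>y\<in>C. u h y - \<psi> y < c) (at_right 0)"
proof -
  have "eventually (\<lambda>h. \<forall>y\<in>C \<inter> cball x \<rho>. u h y - \<psi> y < c) (at_right 0)"
    using closed assms(1)
    by (rule_tac eventually_below_on_compact[OF _ _ continuous_on_imp_lsc_on[OF \<psi>_cont]])
       (auto intro: closed_Int_compact)
  moreover have "eventually (\<lambda>h. 0 < h) (at_right (0::real))" by (rule eventually_at_right_less)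
  ultimately show ?thesis
  proof eventually_elim
    case (elim h)
    show ?case
    proof
      fix y assume y: "y \<in> C"
      show "u h y - \<psi> y < c"
      proof (cases "dist y x < \<rho>")
        case True thus ?thesis using elim y by (auto simp: dist_commute)
      next
        case False thus ?thesis using below_test_function_far[OF elim(2) y] assms(2) by simp
      qed
    qed
  qed
qed

lemma eventually_below_test_function:
  assumes "\<epsilon> > 0"
  shows "eventually (\<lambda>h. \<forall>y\<in>C. u h y - \<psi> y < \<epsilon>) (at_right 0)"
proof (rule eventually_below_test_function_from_cball)
  show "\<forall>z\<in>C \<inter> cball x \<rho>. hr_limsup C u z < ereal (\<psi> z + \<epsilon>)"
  proof
    fix z assume "z \<in> C \<inter> cball x \<rho>"
    hence "hr_limsup C u z \<le> ereal (\<psi> z - min (norm (z - x) ^ 4) 1)" using strict by blast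
    also have "\<dots> < ereal (\<psi> z + \<epsilon>)"
    proof -
      have "0 \<le> min (norm (z - x) ^ 4) 1" by simp
      hence "\<psi> z - min (norm (z - x) ^ 4) 1 < \<psi> z + \<epsilon>" using assms by linarith
      thus ?thesis by simp
    qed
    finally show "hr_limsup C u z < ereal (\<psi> z + \<epsilon>)" .
  qed
qed (use assms in simp)

lemma eventually_below_test_function_off_ball:
  assumes "\<delta> > 0"
  shows "eventually (\<lambda>h. \<forall>y\<in>C. \<delta> \<le> dist y x \<longrightarrow> u h y - \<psi> y < - min (\<delta>^4) 1 / 2) (at_right 0)"
proof -
  let ?m = "min (\<delta>^4) 1"
  let ?K = "C \<inter> cball x \<rho> - ball x \<delta>"
  have "eventually (\<lambda>h. \<forall>y\<in>?K. u h y - \<psi> y < - ?m / 2) (at_right 0)"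
  proof (rule eventually_below_on_compact[OF _ _ continuous_on_imp_lsc_on[OF \<psi>_cont]])
    show "compact ?K" using closed by (intro compact_diff closed_Int_compact) auto
    show "\<forall>z\<in>?K. hr_limsup C u z < ereal (\<psi> z + - ?m / 2)"
    proof
      fix z assume z: "z \<in> ?K"
      have "\<delta>^4 \<le> norm (z - x) ^ 4"
        using z assms by (intro power_mono) (auto simp: dist_norm norm_minus_commute)
      hence "?m \<le> min (norm (z - x) ^ 4) 1" by auto
      moreover have "0 < ?m" using assms by simp
      ultimately have "\<psi> z - min (norm (z - x) ^ 4) 1 < \<psi> z + - ?m / 2" by linarith
      hence "ereal (\<psi> z - min (norm (z - x) ^ 4) 1) < ereal (\<psi> z + - ?m / 2)" by simp
      moreover have "hr_limsup C u z \<le> ereal (\<psi> z - min (norm (z - x) ^ 4) 1)" using strict z by blast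
      ultimately show "hr_limsup C u z < ereal (\<psi> z + - ?m / 2)" by order
    qed
  qed auto
  moreover have "eventually (\<lambda>h. 0 < h) (at_right (0::real))" by (rule eventually_at_right_less)
  ultimately show ?thesis
  proof eventually_elim
    case (elim h)
    show ?case
    proof (intro ballI impI)
      fix y assume y: "y \<in> C" "\<delta> \<le> dist y x"
      show "u h y - \<psi> y < - ?m / 2"
      proof (cases "dist y x \<le> \<rho>")
        case True thus ?thesis using elim y by (auto simp: dist_commute)
      next
        case False
        hence "u h y - \<psi> y \<le> -1" using below_test_function_far[OF elim(2) y(1)] by simp
        moreover have "- ?m / 2 > -1" by auto
        ultimately show ?thesis by linarith
      qed
    qed
  qed
qed

text \<open>The sup of \<open>u h - \<psi>\<close> over \<open>C\<close> need not be attained; it is approached within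
  \<open>exp (-1/h)\<close>, the size of the point perturbation allowed by condition (T).\<close>
lemma arbitrarily_close_touching_points:
  assumes \<eta>: "\<eta> > 0" and h0: "h0 > 0"
  shows "\<exists>h y \<xi>. 0 < h \<and> h < h0 \<and> y \<in> C \<and> dist y x < \<eta> \<and> \<bar>\<xi>\<bar> < \<eta>
           \<and> (\<forall>z\<in>C. u h z \<le> \<psi> z + \<xi>) \<and> u h y = \<psi> y + \<xi> - exp (- 1 / h)"
proof -
  define \<delta> where "\<delta> = \<eta> / 2"
  define m where "m = min (\<delta>^4) 1"
  define \<epsilon> where "\<epsilon> = min (m / 8) (\<eta> / 4)"
  have \<delta>: "0 < \<delta>" "\<delta> < \<eta>" using \<eta> by (auto simp: \<delta>_def)
  have \<epsilon>: "0 < \<epsilon>" "\<epsilon> \<le> m / 8" "\<epsilon> \<le> \<eta> / 4" using \<delta> \<eta> by (auto simp: \<epsilon>_def m_def)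
  define E where "E = (\<lambda>h. (\<forall>y\<in>C. \<delta> \<le> dist y x \<longrightarrow> u h y - \<psi> y < - m / 2)
                       \<and> (\<forall>y\<in>C. u h y - \<psi> y < \<epsilon>) \<and> 0 < h \<and> h < h0 \<and> h < \<epsilon>)"
  have h0\<epsilon>: "0 < min h0 \<epsilon>" using h0 \<epsilon>(1) by simp
  have EE: "eventually E (at_right 0)"
    using eventually_below_test_function_off_ball[OF \<delta>(1)] eventually_below_test_function[OF \<epsilon>(1)]
      eventually_at_right_real[OF h0\<epsilon>]
    unfolding E_def m_def by eventually_elim auto
  have near: "eventually (\<lambda>y. y \<in> C \<and> dist (\<psi> y) (\<psi> x) < \<epsilon>) (inf (nhds x) (principal C))"
    using continuous_on_eventually_dist_less[OF \<psi>_cont x \<epsilon>(1)]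
    by (simp add: eventually_inf_principal eventually_conj_iff)
  have fr: "frequently (\<lambda>(h, y). \<psi> x - \<epsilon> < u h y) (at_right 0 \<times>\<^sub>F inf (nhds x) (principal C))"
  proof -
    have "ereal (\<psi> x - \<epsilon>) < hr_limsup C u x" using touch \<epsilon>(1) by simp
    from less_Limsup_imp_frequently[OF this[unfolded hr_limsup_def]] show ?thesis
      by (rule frequently_elim1) auto
  qed
  have "frequently (\<lambda>(h, y). E h \<and> y \<in> C \<and> dist (\<psi> y) (\<psi> x) < \<epsilon> \<and> \<psi> x - \<epsilon> < u h y)
      (at_right 0 \<times>\<^sub>F inf (nhds x) (principal C))"
    by (rule frequently_rev_mp[OF fr], rule eventually_mono[OF eventually_prodI[OF EE near]]) auto
  then obtain h y0 where "E h" "y0 \<in> C" "dist (\<psi> y0) (\<psi> x) < \<epsilon>" "\<psi> x - \<epsilon> < u h y0"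
    by (auto dest!: frequently_ex)
  hence Eh: "\<forall>y\<in>C. \<delta> \<le> dist y x \<longrightarrow> u h y - \<psi> y < - m / 2" "\<forall>y\<in>C. u h y - \<psi> y < \<epsilon>"
      "0 < h" "h < h0" "h < \<epsilon>" and y0: "y0 \<in> C" "-2 * \<epsilon> < u h y0 - \<psi> y0"
    by (auto simp: E_def dist_real_def)
  have bdd: "bdd_above ((\<lambda>z. u h z - \<psi> z) ` C)"
    using Eh(2) by (intro bdd_aboveI[of _ \<epsilon>]) (auto intro: less_imp_le)
  obtain y where y: "y \<in> C" "\<forall>z\<in>C. u h z - \<psi> z < u h y - \<psi> y + exp (- 1 / h)"
    using near_maximiser[OF _ bdd exp_gt_zero] y0(1) by blast
  define \<xi> where "\<xi> = u h y - \<psi> y + exp (- 1 / h)"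
  have exph: "exp (- 1 / h) \<le> h" using exp_minus_inverse_le[OF Eh(3)] .
  have y0y: "u h y0 - \<psi> y0 < \<xi>" using y(2) y0(1) unfolding \<xi>_def by blast
  have "u h y - \<psi> y < \<epsilon>" using Eh(2) y(1) by blast
  hence "- \<eta> < \<xi>" "\<xi> < \<eta>" using y0y y0(2) exph Eh(5) \<epsilon>(1,3) unfolding \<xi>_def by linarith+
  hence "\<bar>\<xi>\<bar> < \<eta>" by (simp add: abs_less_iff)
  moreover have "- m / 2 < u h y - \<psi> y" using y0y y0(2) exph Eh(5) \<epsilon>(1,2) unfolding \<xi>_def by linarith
  hence "dist y x < \<delta>" using Eh(1) y(1) by (meson not_le order.asym)
  moreover have "\<forall>z\<in>C. u h z \<le> \<psi> z + \<xi>" using y(2) unfolding \<xi>_def by (auto intro: less_imp_le)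
  ultimately show ?thesis
    using Eh(3,4) y(1) \<delta>(2) by (intro exI[of _ h] exI[of _ y] exI[of _ \<xi>]) (auto simp: \<xi>_def)
qed

end

lemma frequently_if_arbitrarily_close:
  fixes P :: "real \<Rightarrow> 'a::metric_space \<Rightarrow> real \<Rightarrow> bool"
  assumes "\<And>\<eta> h0. 0 < \<eta> \<Longrightarrow> 0 < h0 \<Longrightarrow>
             \<exists>h y \<xi>. 0 < h \<and> h < h0 \<and> y \<in> C \<and> dist y x < \<eta> \<and> \<bar>\<xi>\<bar> < \<eta> \<and> P h y \<xi>"
  shows "frequently (\<lambda>(h, y, \<xi>). P h y \<xi>) (at_right 0 \<times>\<^sub>F inf (nhds x) (principal C) \<times>\<^sub>F nhds 0)"
  unfolding frequently_def
proof
  assume "eventually (\<lambda>p. \<not> (case p of (h, y, \<xi>) \<Rightarrow> P h y \<xi>))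
            (at_right 0 \<times>\<^sub>F inf (nhds x) (principal C) \<times>\<^sub>F nhds 0)"
  then obtain Ph Py P\<xi> where ev: "eventually Ph (at_right 0)" "eventually Py (inf (nhds x) (principal C))"
      "eventually P\<xi> (nhds 0)" and not_P: "\<And>h y \<xi>. Ph h \<Longrightarrow> Py y \<Longrightarrow> P\<xi> \<xi> \<Longrightarrow> \<not> P h y \<xi>"
    unfolding eventually_prod_filter by auto
  obtain h0 where h0: "0 < h0" "\<forall>h. 0 < h \<longrightarrow> h < h0 \<longrightarrow> Ph h"
    using ev(1) unfolding eventually_at_right_field by auto
  obtain r where r: "0 < r" "\<forall>y\<in>C. dist y x < r \<longrightarrow> Py y"
    using ev(2) unfolding eventually_inf_principal eventually_nhds_metric by auto
  obtain d where d: "0 < d" "\<forall>\<xi>. dist \<xi> 0 < d \<longrightarrow> P\<xi> \<xi>"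
    using ev(3) unfolding eventually_nhds_metric by auto
  obtain h y \<xi> where "0 < h" "h < h0" "y \<in> C" "dist y x < min r d" "\<bar>\<xi>\<bar> < min r d" "P h y \<xi>"
    using assms[of "min r d" h0] r(1) d(1) h0(1) by auto
  thus False using not_P h0(2) r(2) d(2) by (auto simp: dist_real_def)
qed

lemma tendsto_prod_at_right_smallE:
  fixes f :: "'a::metric_space \<Rightarrow> real \<Rightarrow> real"
  assumes "((\<lambda>(y, h). f y h) \<longlongrightarrow> 0) (inf (nhds x) (principal C) \<times>\<^sub>F at_right 0)" "0 < r"
  obtains \<eta> h1 where "0 < \<eta>" "0 < h1" "\<And>y h. y \<in> C \<Longrightarrow> dist y x < \<eta> \<Longrightarrow> 0 < h \<Longrightarrow> h < h1 \<Longrightarrow> f y h < r"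
proof -
  have "eventually (\<lambda>(y, h). f y h < r) (inf (nhds x) (principal C) \<times>\<^sub>F at_right 0)"
    using order_tendstoD(2)[OF assms] by (simp add: case_prod_beta')
  then obtain Py Ph where "eventually Py (inf (nhds x) (principal C))" "eventually Ph (at_right 0)"
    "\<And>y h. Py y \<Longrightarrow> Ph h \<Longrightarrow> f y h < r"
    unfolding eventually_prod_filter by auto
  thus ?thesis using that
    unfolding eventually_inf_principal eventually_nhds_metric eventually_at_right_field by metis
qed

section \<open>The scheme at touching points\<close>

lemma bdd_on_add: "bdd_on A u \<Longrightarrow> bdd_on A v \<Longrightarrow> bdd_on A (\<lambda>z. u z + v z)"
  unfolding bdd_on_def by (metis abs_triangle_ineq add_mono order_trans)

lemma bdd_on_point_mass: "bdd_on A (\<lambda>z. c * (if z = y then 1 else 0))"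
  unfolding bdd_on_def by (intro exI[of _ "\<bar>c\<bar>"]) simp

lemma bdd_on_const: "bdd_on A (\<lambda>z. c)"
  unfolding bdd_on_def by blast

text \<open>The factors \<open>-1\<close> and \<open>1\<close> below are kept so that the perturbations literally match the
  two instances \<open>\<sigma> \<in> {1, -1}\<close> of \<open>condition_T\<close>.\<close>
lemma scheme_nonpos_at_touch_from_above:
  assumes mono: "scheme_monotone \<Omega> S" and sol: "scheme_solution \<Omega> S Ih h V" and "0 < h" "y \<in> closure \<Omega>"
    and \<phi>: "bdd_on (closure \<Omega>) \<phi>" and above: "\<forall>z\<in>closure \<Omega>. V z \<le> \<phi> z" and at_y: "V y = \<phi> y - exp (- 1 / h)"
  shows "S h y (ext (closure \<Omega>) (\<lambda>z. \<phi> z + (-1) * exp (- 1 / h) * (if z = y then 1 else 0)))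
           (Ih h (ext (closure \<Omega>) V) y) \<le> 0"
proof -
  let ?W = "\<lambda>z. \<phi> z + (-1) * exp (- 1 / h) * (if z = y then 1 else 0)"
  have "bdd_on (closure \<Omega>) ?W" using \<phi> by (intro bdd_on_add bdd_on_point_mass)
  moreover have "bdd_on (closure \<Omega>) V" using sol by (simp add: scheme_solution_def)
  moreover have "\<forall>z\<in>closure \<Omega>. V z \<le> ?W z" "?W y = V y" using above at_y by auto
  ultimately have "S h y (ext (closure \<Omega>) ?W) (Ih h (ext (closure \<Omega>) V) y)
      \<le> S h y (ext (closure \<Omega>) V) (Ih h (ext (closure \<Omega>) V) y)"
    using mono assms(3,4) unfolding scheme_monotone_def by blast
  thus ?thesis using sol assms(4) by (simp add: scheme_solution_def)
qed

lemma scheme_nonneg_at_touch_from_below: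
  assumes mono: "scheme_monotone \<Omega> S" and sol: "scheme_solution \<Omega> S Ih h V" and "0 < h" "y \<in> closure \<Omega>"
    and \<phi>: "bdd_on (closure \<Omega>) \<phi>" and below: "\<forall>z\<in>closure \<Omega>. \<phi> z \<le> V z" and at_y: "V y = \<phi> y + exp (- 1 / h)"
  shows "0 \<le> S h y (ext (closure \<Omega>) (\<lambda>z. \<phi> z + 1 * exp (- 1 / h) * (if z = y then 1 else 0)))
           (Ih h (ext (closure \<Omega>) V) y)"
proof -
  let ?W = "\<lambda>z. \<phi> z + 1 * exp (- 1 / h) * (if z = y then 1 else 0)"
  have "bdd_on (closure \<Omega>) ?W" using \<phi> by (intro bdd_on_add bdd_on_point_mass)
  moreover have "bdd_on (closure \<Omega>) V" using sol by (simp add: scheme_solution_def)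
  moreover have "\<forall>z\<in>closure \<Omega>. ?W z \<le> V z" "V y = ?W y" using below at_y by auto
  ultimately have "S h y (ext (closure \<Omega>) V) (Ih h (ext (closure \<Omega>) V) y)
      \<le> S h y (ext (closure \<Omega>) ?W) (Ih h (ext (closure \<Omega>) V) y)"
    using mono assms(3,4) unfolding scheme_monotone_def by blast
  thus ?thesis using sol assms(4) by (simp add: scheme_solution_def)
qed

lemma scheme_Liminf_nonpos_at_touch_from_above:
  fixes \<Omega> :: "'n::finite pt set" and Vh :: "real \<Rightarrow> 'n pt \<Rightarrow> real"
  assumes mono: "scheme_monotone \<Omega> S" and T: "condition_T \<Omega> S"
    and sol: "\<forall>h>0. scheme_solution \<Omega> S Ih h (Vh h)"
    and x: "x \<in> closure \<Omega>" and \<psi>: "bdd_on (closure \<Omega>) \<psi>"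
    and close: "\<And>\<eta> h0. 0 < \<eta> \<Longrightarrow> 0 < h0 \<Longrightarrow> \<exists>h y \<xi>. 0 < h \<and> h < h0 \<and> y \<in> closure \<Omega> \<and> dist y x < \<eta>
      \<and> \<bar>\<xi>\<bar> < \<eta> \<and> (\<forall>z\<in>closure \<Omega>. Vh h z \<le> \<psi> z + \<xi>) \<and> Vh h y = \<psi> y + \<xi> - exp (- 1 / h)"
  defines "G \<equiv> at_right 0 \<times>\<^sub>F inf (nhds x) (principal (closure \<Omega>)) \<times>\<^sub>F nhds 0"
    and "s \<equiv> (\<lambda>(h, y, \<xi>). ereal (S h y (ext (closure \<Omega>) (\<lambda>z. \<psi> z + \<xi>)) (Ih h (ext (closure \<Omega>) (Vh h)) y)))"
  shows "Liminf G s \<le> 0"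
proof (rule ereal_le_epsilon2)
  fix r :: real assume r: "0 < r"
  obtain f :: "'n pt \<Rightarrow> real \<Rightarrow> real" where
    f_lim: "((\<lambda>(y, h). f y h) \<longlongrightarrow> 0) (inf (nhds x) (principal (closure \<Omega>)) \<times>\<^sub>F at_right 0)"
    and f_bound: "\<forall>h>0. \<forall>y\<in>closure \<Omega>. \<forall>l \<phi>. bdd_on (closure \<Omega>) \<phi> \<longrightarrow> (\<forall>\<sigma>\<in>{1, -1}.
         \<bar>S h y (ext (closure \<Omega>) (\<lambda>z. \<phi> z + \<sigma> * exp (-1/h) * (if z = y then 1 else 0))) l
          - S h y (ext (closure \<Omega>) \<phi>) l\<bar> \<le> f y h)"
    using T x unfolding condition_T_def by blast
  obtain \<eta>1 h1 where \<eta>1: "0 < \<eta>1" "0 < h1"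
    and f_small: "\<And>y h. y \<in> closure \<Omega> \<Longrightarrow> dist y x < \<eta>1 \<Longrightarrow> 0 < h \<Longrightarrow> h < h1 \<Longrightarrow> f y h < r"
    using tendsto_prod_at_right_smallE[OF f_lim r] by blast
  have "frequently (\<lambda>(h, y, \<xi>). 0 < h \<and> y \<in> closure \<Omega> \<and> f y h < r
      \<and> (\<forall>z\<in>closure \<Omega>. Vh h z \<le> \<psi> z + \<xi>) \<and> Vh h y = \<psi> y + \<xi> - exp (- 1 / h))
      G"
    unfolding G_def
  proof (rule frequently_if_arbitrarily_close)
    fix \<eta> h0 :: real assume "0 < \<eta>" "0 < h0"
    then obtain h y \<xi> where "0 < h" "h < min h0 h1" "y \<in> closure \<Omega>" "dist y x < min \<eta> \<eta>1" "\<bar>\<xi>\<bar> < min \<eta> \<eta>1"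
        "\<forall>z\<in>closure \<Omega>. Vh h z \<le> \<psi> z + \<xi>" "Vh h y = \<psi> y + \<xi> - exp (- 1 / h)"
      using close[of "min \<eta> \<eta>1" "min h0 h1"] \<eta>1 by auto
    thus "\<exists>h y \<xi>. 0 < h \<and> h < h0 \<and> y \<in> closure \<Omega> \<and> dist y x < \<eta> \<and> \<bar>\<xi>\<bar> < \<eta>
        \<and> 0 < h \<and> y \<in> closure \<Omega> \<and> f y h < r
        \<and> (\<forall>z\<in>closure \<Omega>. Vh h z \<le> \<psi> z + \<xi>) \<and> Vh h y = \<psi> y + \<xi> - exp (- 1 / h)"
      using f_small by (intro exI[of _ h] exI[of _ y] exI[of _ \<xi>]) auto
  qed
  hence "frequently (\<lambda>(h, y, \<xi>). S h y (ext (closure \<Omega>) (\<lambda>z. \<psi> z + \<xi>)) (Ih h (ext (closure \<Omega>) (Vh h)) y) \<le> r)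
      G"
  proof (rule frequently_elim1, clarify)
    fix h y \<xi> assume h: "0 < h" and y: "y \<in> closure \<Omega>" and "f y h < r"
      and above: "\<forall>z\<in>closure \<Omega>. Vh h z \<le> \<psi> z + \<xi>" and at_y: "Vh h y = \<psi> y + \<xi> - exp (- 1 / h)"
    let ?l = "Ih h (ext (closure \<Omega>) (Vh h)) y"
    have bdd: "bdd_on (closure \<Omega>) (\<lambda>z. \<psi> z + \<xi>)" using \<psi> by (intro bdd_on_add bdd_on_const)
    have "S h y (ext (closure \<Omega>) (\<lambda>z. \<psi> z + \<xi> + (-1) * exp (- 1 / h) * (if z = y then 1 else 0))) ?l \<le> 0"
      using sol h by (intro scheme_nonpos_at_touch_from_above[OF mono _ h y bdd above at_y]) auto
    moreover have "\<bar>S h y (ext (closure \<Omega>) (\<lambda>z. \<psi> z + \<xi> + (-1) * exp (- 1 / h) * (if z = y then 1 else 0))) ?l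
        - S h y (ext (closure \<Omega>) (\<lambda>z. \<psi> z + \<xi>)) ?l\<bar> \<le> f y h"
      using f_bound h y bdd by fastforce
    ultimately show "S h y (ext (closure \<Omega>) (\<lambda>z. \<psi> z + \<xi>)) ?l \<le> r" using \<open>f y h < r\<close> by linarith
  qed
  thus "Liminf G s \<le> 0 + ereal r"
    unfolding G_def s_def by (intro Liminf_le_if_frequently) (auto elim!: frequently_elim1)
qed

lemma scheme_Limsup_nonneg_at_touch_from_below:
  fixes \<Omega> :: "'n::finite pt set" and Vh :: "real \<Rightarrow> 'n pt \<Rightarrow> real"
  assumes mono: "scheme_monotone \<Omega> S" and T: "condition_T \<Omega> S"
    and sol: "\<forall>h>0. scheme_solution \<Omega> S Ih h (Vh h)"
    and x: "x \<in> closure \<Omega>" and \<psi>: "bdd_on (closure \<Omega>) \<psi>"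
    and close: "\<And>\<eta> h0. 0 < \<eta> \<Longrightarrow> 0 < h0 \<Longrightarrow> \<exists>h y \<xi>. 0 < h \<and> h < h0 \<and> y \<in> closure \<Omega> \<and> dist y x < \<eta>
      \<and> \<bar>\<xi>\<bar> < \<eta> \<and> (\<forall>z\<in>closure \<Omega>. \<psi> z + \<xi> \<le> Vh h z) \<and> Vh h y = \<psi> y + \<xi> + exp (- 1 / h)"
  defines "G \<equiv> at_right 0 \<times>\<^sub>F inf (nhds x) (principal (closure \<Omega>)) \<times>\<^sub>F nhds 0"
    and "s \<equiv> (\<lambda>(h, y, \<xi>). ereal (S h y (ext (closure \<Omega>) (\<lambda>z. \<psi> z + \<xi>)) (Ih h (ext (closure \<Omega>) (Vh h)) y)))"
  shows "0 \<le> Limsup G s"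
proof (rule ereal_le_epsilon2)
  fix r :: real assume r: "0 < r"
  obtain f :: "'n pt \<Rightarrow> real \<Rightarrow> real" where
    f_lim: "((\<lambda>(y, h). f y h) \<longlongrightarrow> 0) (inf (nhds x) (principal (closure \<Omega>)) \<times>\<^sub>F at_right 0)"
    and f_bound: "\<forall>h>0. \<forall>y\<in>closure \<Omega>. \<forall>l \<phi>. bdd_on (closure \<Omega>) \<phi> \<longrightarrow> (\<forall>\<sigma>\<in>{1, -1}.
         \<bar>S h y (ext (closure \<Omega>) (\<lambda>z. \<phi> z + \<sigma> * exp (-1/h) * (if z = y then 1 else 0))) l
          - S h y (ext (closure \<Omega>) \<phi>) l\<bar> \<le> f y h)"
    using T x unfolding condition_T_def by blast
  obtain \<eta>1 h1 where \<eta>1: "0 < \<eta>1" "0 < h1"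
    and f_small: "\<And>y h. y \<in> closure \<Omega> \<Longrightarrow> dist y x < \<eta>1 \<Longrightarrow> 0 < h \<Longrightarrow> h < h1 \<Longrightarrow> f y h < r"
    using tendsto_prod_at_right_smallE[OF f_lim r] by blast
  have "frequently (\<lambda>(h, y, \<xi>). 0 < h \<and> y \<in> closure \<Omega> \<and> f y h < r
      \<and> (\<forall>z\<in>closure \<Omega>. \<psi> z + \<xi> \<le> Vh h z) \<and> Vh h y = \<psi> y + \<xi> + exp (- 1 / h))
      G"
    unfolding G_def
  proof (rule frequently_if_arbitrarily_close)
    fix \<eta> h0 :: real assume "0 < \<eta>" "0 < h0"
    then obtain h y \<xi> where "0 < h" "h < min h0 h1" "y \<in> closure \<Omega>" "dist y x < min \<eta> \<eta>1" "\<bar>\<xi>\<bar> < min \<eta> \<eta>1"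
        "\<forall>z\<in>closure \<Omega>. \<psi> z + \<xi> \<le> Vh h z" "Vh h y = \<psi> y + \<xi> + exp (- 1 / h)"
      using close[of "min \<eta> \<eta>1" "min h0 h1"] \<eta>1 by auto
    thus "\<exists>h y \<xi>. 0 < h \<and> h < h0 \<and> y \<in> closure \<Omega> \<and> dist y x < \<eta> \<and> \<bar>\<xi>\<bar> < \<eta>
        \<and> 0 < h \<and> y \<in> closure \<Omega> \<and> f y h < r
        \<and> (\<forall>z\<in>closure \<Omega>. \<psi> z + \<xi> \<le> Vh h z) \<and> Vh h y = \<psi> y + \<xi> + exp (- 1 / h)"
      using f_small by (intro exI[of _ h] exI[of _ y] exI[of _ \<xi>]) auto
  qed
  hence "frequently (\<lambda>(h, y, \<xi>). S h y (ext (closure \<Omega>) (\<lambda>z. \<psi> z + \<xi>)) (Ih h (ext (closure \<Omega>) (Vh h)) y) \<ge> - r)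
      G"
  proof (rule frequently_elim1, clarify)
    fix h y \<xi> assume h: "0 < h" and y: "y \<in> closure \<Omega>" and "f y h < r"
      and below: "\<forall>z\<in>closure \<Omega>. \<psi> z + \<xi> \<le> Vh h z" and at_y: "Vh h y = \<psi> y + \<xi> + exp (- 1 / h)"
    let ?l = "Ih h (ext (closure \<Omega>) (Vh h)) y"
    have bdd: "bdd_on (closure \<Omega>) (\<lambda>z. \<psi> z + \<xi>)" using \<psi> by (intro bdd_on_add bdd_on_const)
    have "0 \<le> S h y (ext (closure \<Omega>) (\<lambda>z. \<psi> z + \<xi> + 1 * exp (- 1 / h) * (if z = y then 1 else 0))) ?l"
      using sol h by (intro scheme_nonneg_at_touch_from_below[OF mono _ h y bdd below at_y]) auto
    moreover have "\<bar>S h y (ext (closure \<Omega>) (\<lambda>z. \<psi> z + \<xi> + 1 * exp (- 1 / h) * (if z = y then 1 else 0))) ?l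
        - S h y (ext (closure \<Omega>) (\<lambda>z. \<psi> z + \<xi>)) ?l\<bar> \<le> f y h"
      using f_bound h y bdd by fastforce
    ultimately show "- r \<le> S h y (ext (closure \<Omega>) (\<lambda>z. \<psi> z + \<xi>)) ?l" using \<open>f y h < r\<close> by linarith
  qed
  hence "ereal (- r) \<le> Limsup G s"
    unfolding G_def s_def by (intro Limsup_ge_if_frequently) (auto elim!: frequently_elim1)
  thus "0 \<le> Limsup G s + ereal r" by (cases "Limsup G s") auto
qed

lemma visc_sub_upper_relaxed_limit:
  fixes \<Omega> :: "'n::finite pt set" and Vh :: "real \<Rightarrow> 'n pt \<Rightarrow> real"
  assumes mono: "scheme_monotone \<Omega> S" and consistent: "nonlocally_consistent \<Omega> F I S Ih"
    and T: "condition_T \<Omega> S" and sol: "\<forall>h>0. scheme_solution \<Omega> S Ih h (Vh h)"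
    and bounded: "\<forall>h>0. \<forall>y\<in>closure \<Omega>. \<bar>Vh h y\<bar> \<le> B"
  shows "visc_sub \<Omega> F I (upper_relaxed_limit (closure \<Omega>) Vh)"
  unfolding visc_sub_def
proof (intro conjI allI impI)
  let ?C = "closure \<Omega>"
  let ?V = "upper_relaxed_limit ?C Vh"
  show "usc_on ?C ?V" by (rule usc_on_upper_relaxed_limit[OF bounded])
  fix \<phi> x assume \<phi>: "C2_nbhd ?C \<phi>" and x: "x \<in> ?C" and max: "loc_max_rel ?C (\<lambda>y. ?V y - \<phi> y) x"
  obtain \<psi> \<rho> where \<psi>: "C2_nbhd ?C \<psi>" "bdd_on ?C \<psi>" "continuous_on ?C \<psi>"
      "\<psi> x = ?V x" "grad \<psi> x = grad \<phi> x" "hess \<psi> x = hess \<phi> x"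
      "\<forall>y\<in>?C. ?V y - \<psi> y \<le> - min (norm (y - x) ^ 4) 1"
    and \<rho>: "\<rho> > 0" "\<forall>y\<in>?C. \<rho> \<le> dist y x \<longrightarrow> B + 1 \<le> \<psi> y"
    by (rule strict_touching_test_function[OF \<phi> closed_closure x max ballI[OF relaxed_limits_real(2)[OF bounded]]])
  have V_eq: "hr_limsup ?C Vh y = ereal (?V y)" if "y \<in> ?C" for y
    by (rule relaxed_limits_real(1)[OF bounded that])
  have "Flower \<Omega> F x (\<psi> x) (grad \<psi> x) (hess \<psi> x) (I (ext ?C ?V) x)
      \<le> Liminf (at_right 0 \<times>\<^sub>F inf (nhds x) (principal ?C) \<times>\<^sub>F nhds 0)
          (\<lambda>(h, y, \<xi>). ereal (S h y (ext ?C (\<lambda>z. \<psi> z + \<xi>)) (Ih h (ext ?C (Vh h)) y)))"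
    using consistent \<psi>(1) x bounded
    unfolding nonlocally_consistent_def Let_def upper_relaxed_limit_def[abs_def] by blast
  also have "\<dots> \<le> 0"
  proof (rule scheme_Liminf_nonpos_at_touch_from_above[OF mono T sol x \<psi>(2)])
    fix \<eta> h0 :: real assume "0 < \<eta>" "0 < h0"
    moreover have "\<forall>z\<in>?C. hr_limsup ?C Vh z \<le> ereal (\<psi> z - min (norm (z - x) ^ 4) 1)"
      using \<psi>(7) V_eq by (auto simp: algebra_simps)
    ultimately show "\<exists>h y \<xi>. 0 < h \<and> h < h0 \<and> y \<in> ?C \<and> dist y x < \<eta> \<and> \<bar>\<xi>\<bar> < \<eta>
        \<and> (\<forall>z\<in>?C. Vh h z \<le> \<psi> z + \<xi>) \<and> Vh h y = \<psi> y + \<xi> - exp (- 1 / h)"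
      using \<psi>(3,4) V_eq[OF x] \<rho>
      by (intro arbitrarily_close_touching_points[OF closed_closure x bounded]) auto
  qed
  finally show "Flower \<Omega> F x (?V x) (grad \<phi> x) (hess \<phi> x) (I (ext ?C ?V) x) \<le> 0"
    using \<psi>(4,5,6) by simp
qed

lemma visc_super_lower_relaxed_limit:
  fixes \<Omega> :: "'n::finite pt set" and Vh :: "real \<Rightarrow> 'n pt \<Rightarrow> real"
  assumes mono: "scheme_monotone \<Omega> S" and consistent: "nonlocally_consistent \<Omega> F I S Ih"
    and T: "condition_T \<Omega> S" and sol: "\<forall>h>0. scheme_solution \<Omega> S Ih h (Vh h)"
    and bounded: "\<forall>h>0. \<forall>y\<in>closure \<Omega>. \<bar>Vh h y\<bar> \<le> B"
  shows "visc_super \<Omega> F I (lower_relaxed_limit (closure \<Omega>) Vh)"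
  unfolding visc_super_def
proof (intro conjI allI impI)
  let ?C = "closure \<Omega>"
  let ?V = "lower_relaxed_limit ?C Vh"
  let ?u = "\<lambda>h y. - Vh h y"
  show "lsc_on ?C ?V" by (rule lsc_on_lower_relaxed_limit[OF bounded])
  fix \<phi> x assume \<phi>: "C2_nbhd ?C \<phi>" and x: "x \<in> ?C" and min: "loc_min_rel ?C (\<lambda>y. ?V y - \<phi> y) x"
  have bounded': "\<forall>h>0. \<forall>y\<in>?C. \<bar>?u h y\<bar> \<le> B" using bounded by simp
  have U_eq: "upper_relaxed_limit ?C ?u y = - ?V y" for y by (simp add: upper_relaxed_limit_uminus)
  have max': "loc_max_rel ?C (\<lambda>y. upper_relaxed_limit ?C ?u y - (- \<phi> y)) x"
    using min unfolding loc_min_rel_def loc_max_rel_def U_eq by (force simp: algebra_simps)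
  obtain \<psi>' \<rho> where \<psi>': "C2_nbhd ?C \<psi>'" "bdd_on ?C \<psi>'" "continuous_on ?C \<psi>'"
      "\<psi>' x = upper_relaxed_limit ?C ?u x" "grad \<psi>' x = grad (\<lambda>y. - \<phi> y) x"
      "hess \<psi>' x = hess (\<lambda>y. - \<phi> y) x"
      "\<forall>y\<in>?C. upper_relaxed_limit ?C ?u y - \<psi>' y \<le> - min (norm (y - x) ^ 4) 1"
    and \<rho>: "\<rho> > 0" "\<forall>y\<in>?C. \<rho> \<le> dist y x \<longrightarrow> B + 1 \<le> \<psi>' y"
    by (rule strict_touching_test_function[OF C2_nbhd_uminus(1)[OF \<phi> x] closed_closure x max'
          ballI[OF relaxed_limits_real(2)[OF bounded']]])
  define \<psi> where "\<psi> = (\<lambda>y. - \<psi>' y)"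
  have \<psi>: "C2_nbhd ?C \<psi>" "bdd_on ?C \<psi>" "\<psi> x = ?V x" "grad \<psi> x = grad \<phi> x" "hess \<psi> x = hess \<phi> x"
    using C2_nbhd_uminus[OF \<psi>'(1) x] C2_nbhd_uminus(2,3)[OF \<phi> x] \<psi>'(2,4,5,6)
    unfolding \<psi>_def bdd_on_def U_eq by auto
  have U_hr: "hr_limsup ?C ?u y = ereal (upper_relaxed_limit ?C ?u y)" if "y \<in> ?C" for y
    by (rule relaxed_limits_real(1)[OF bounded' that])
  have "0 \<le> Limsup (at_right 0 \<times>\<^sub>F inf (nhds x) (principal ?C) \<times>\<^sub>F nhds 0)
          (\<lambda>(h, y, \<xi>). ereal (S h y (ext ?C (\<lambda>z. \<psi> z + \<xi>)) (Ih h (ext ?C (Vh h)) y)))"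
  proof (rule scheme_Limsup_nonneg_at_touch_from_below[OF mono T sol x \<psi>(2)])
    fix \<eta> h0 :: real assume "0 < \<eta>" "0 < h0"
    moreover have "\<forall>z\<in>?C. hr_limsup ?C ?u z \<le> ereal (\<psi>' z - min (norm (z - x) ^ 4) 1)"
      using \<psi>'(7) U_hr by (auto simp: algebra_simps)
    ultimately have "\<exists>h y \<xi>. 0 < h \<and> h < h0 \<and> y \<in> ?C \<and> dist y x < \<eta> \<and> \<bar>\<xi>\<bar> < \<eta>
        \<and> (\<forall>z\<in>?C. ?u h z \<le> \<psi>' z + \<xi>) \<and> ?u h y = \<psi>' y + \<xi> - exp (- 1 / h)"
      using \<psi>'(3,4) U_hr[OF x] \<rho>
      by (intro arbitrarily_close_touching_points[OF closed_closure x bounded']) auto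
    then obtain h y \<xi> where "0 < h \<and> h < h0 \<and> y \<in> ?C \<and> dist y x < \<eta> \<and> \<bar>\<xi>\<bar> < \<eta>
        \<and> (\<forall>z\<in>?C. ?u h z \<le> \<psi>' z + \<xi>) \<and> ?u h y = \<psi>' y + \<xi> - exp (- 1 / h)"
      by blast
    thus "\<exists>h y \<xi>. 0 < h \<and> h < h0 \<and> y \<in> ?C \<and> dist y x < \<eta> \<and> \<bar>\<xi>\<bar> < \<eta>
        \<and> (\<forall>z\<in>?C. \<psi> z + \<xi> \<le> Vh h z) \<and> Vh h y = \<psi> y + \<xi> + exp (- 1 / h)"
      by (intro exI[of _ h] exI[of _ y] exI[of _ "- \<xi>"]) (auto simp: \<psi>_def)
  qed
  also have "\<dots> \<le> Fupper \<Omega> F x (\<psi> x) (grad \<psi> x) (hess \<psi> x) (I (ext ?C ?V) x)"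
    using consistent \<psi>(1) x bounded
    unfolding nonlocally_consistent_def Let_def lower_relaxed_limit_def[abs_def] by blast
  finally show "0 \<le> Fupper \<Omega> F x (?V x) (grad \<phi> x) (hess \<phi> x) (I (ext ?C ?V) x)"
    using \<psi>(3,4,5) by simp
qed

section \<open>Convergence\<close>

lemma visc_super_cong:
  assumes eq: "\<forall>x\<in>closure \<Omega>. V x = W x" and W: "visc_super \<Omega> F I W"
  shows "visc_super \<Omega> F I V"
proof -
  have "ext (closure \<Omega>) V = ext (closure \<Omega>) W" using eq by (auto simp: ext_def)
  moreover have "lsc_env (closure \<Omega>) V = lsc_env (closure \<Omega>) W"
    unfolding lsc_env_def using eq
    by (intro ext Liminf_eq) (simp add: eventually_inf_principal)
  moreover have "loc_min_rel (closure \<Omega>) (\<lambda>y. V y - \<phi> y) x = loc_min_rel (closure \<Omega>) (\<lambda>y. W y - \<phi> y) x"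
    if "x \<in> closure \<Omega>" for \<phi> x
    using eq that unfolding loc_min_rel_def by auto
  ultimately show ?thesis using W eq unfolding visc_super_def lsc_on_def by auto
qed

lemma visc_sol_unique:
  assumes "comparison_principle \<Omega> F I"
    and "bdd_on (closure \<Omega>) V" "visc_sol \<Omega> F I V" "bdd_on (closure \<Omega>) W" "visc_sol \<Omega> F I W"
  shows "\<forall>x\<in>closure \<Omega>. W x = V x"
  using assms unfolding comparison_principle_def visc_sol_def by (meson order_antisym)

lemma relaxed_limits_coincide:
  fixes \<Omega> :: "'n::finite pt set" and Vh :: "real \<Rightarrow> 'n pt \<Rightarrow> real"
  assumes comparison: "comparison_principle \<Omega> F I"
    and bounded: "\<forall>h>0. \<forall>y\<in>closure \<Omega>. \<bar>Vh h y\<bar> \<le> B"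
    and sub: "visc_sub \<Omega> F I (upper_relaxed_limit (closure \<Omega>) Vh)"
    and super: "visc_super \<Omega> F I (lower_relaxed_limit (closure \<Omega>) Vh)"
    and x: "x \<in> closure \<Omega>"
  shows "upper_relaxed_limit (closure \<Omega>) Vh x = lower_relaxed_limit (closure \<Omega>) Vh x"
proof (rule order_antisym)
  have "bdd_on (closure \<Omega>) (upper_relaxed_limit (closure \<Omega>) Vh)"
    "bdd_on (closure \<Omega>) (lower_relaxed_limit (closure \<Omega>) Vh)"
    using relaxed_limits_real(2,4)[OF bounded] unfolding bdd_on_def by blast+
  thus "upper_relaxed_limit (closure \<Omega>) Vh x \<le> lower_relaxed_limit (closure \<Omega>) Vh x"
    using comparison sub super x unfolding comparison_principle_def by blast
  show "lower_relaxed_limit (closure \<Omega>) Vh x \<le> upper_relaxed_limit (closure \<Omega>) Vh x"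
    using hr_limits_bounded(2)[OF bounded x] relaxed_limits_real(1,3)[OF bounded x] by simp
qed

lemma uniform_limit_if_relaxed_limits_agree:
  assumes usc: "usc_on C V" and lsc: "lsc_on C V"
    and upper: "\<forall>z\<in>C. hr_limsup C u z = ereal (V z)" and lower: "\<forall>z\<in>C. hr_liminf C u z = ereal (V z)"
    and K: "compact K" "K \<subseteq> C"
  shows "uniform_limit K u V (at_right 0)"
  unfolding uniform_limit_iff
proof (intro allI impI)
  fix e :: real assume e: "0 < e"
  have "eventually (\<lambda>h. \<forall>y\<in>K. u h y - V y < e) (at_right 0)"
    using upper K e by (intro eventually_below_on_compact[OF K lsc]) auto
  moreover have "eventually (\<lambda>h. \<forall>y\<in>K. - u h y - (- V y) < e) (at_right 0)"
  proof (rule eventually_below_on_compact[OF K])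
    show "lsc_on C (\<lambda>z. - V z)" using usc by (simp add: lsc_on_uminus_iff)
    show "\<forall>z\<in>K. hr_limsup C (\<lambda>h y. - u h y) z < ereal (- V z + e)"
      using lower K e by (auto simp: hr_limsup_uminus)
  qed
  ultimately show "eventually (\<lambda>h. \<forall>y\<in>K. dist (u h y) (V y) < e) (at_right 0)"
    by eventually_elim (auto simp: dist_real_def abs_less_iff)
qed

theorem theorem4p11:
  fixes \<Omega> :: "(real^'n::finite) set"
    and F :: "real^'n \<Rightarrow> real \<Rightarrow> real^'n \<Rightarrow> real^'n^'n \<Rightarrow> real \<Rightarrow> real"
    and I :: "(real^'n \<Rightarrow> real) \<Rightarrow> real^'n \<Rightarrow> real"
    and S :: "real \<Rightarrow> real^'n \<Rightarrow> (real^'n \<Rightarrow> real) \<Rightarrow> real \<Rightarrow> real"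
    and Ih :: "real \<Rightarrow> (real^'n \<Rightarrow> real) \<Rightarrow> real^'n \<Rightarrow> real"
    and Vh :: "real \<Rightarrow> real^'n \<Rightarrow> real"
  assumes F_locbdd: "locally_bounded_on (Fdom \<Omega>) (Fun5 F)"
    and comparison: "comparison_principle \<Omega> F I"
    and Ih_B: "\<forall>h>0. \<forall>u. bdd_on (closure \<Omega>) u \<longrightarrow> bdd_on (closure \<Omega>) (Ih h (ext (closure \<Omega>) u))"
    and mono: "scheme_monotone \<Omega> S"
    and stable: "scheme_stable \<Omega> S Ih"
    and consistent: "nonlocally_consistent \<Omega> F I S Ih"
    and T: "condition_T \<Omega> S"
    and sol: "\<forall>h>0. scheme_solution \<Omega> S Ih h (Vh h)"
  shows "\<exists>V. bdd_on (closure \<Omega>) V \<and> visc_sol \<Omega> F I V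
           \<and> (\<forall>W. bdd_on (closure \<Omega>) W \<and> visc_sol \<Omega> F I W \<longrightarrow> (\<forall>x\<in>closure \<Omega>. W x = V x))
           \<and> (\<forall>K. compact K \<and> K \<subseteq> closure \<Omega> \<longrightarrow> uniform_limit K Vh V (at_right 0))"
proof -
  obtain B where bounded: "\<forall>h>0. \<forall>y\<in>closure \<Omega>. \<bar>Vh h y\<bar> \<le> B"
    using stable sol unfolding scheme_stable_def by meson
  define V where "V = upper_relaxed_limit (closure \<Omega>) Vh"
  have sub: "visc_sub \<Omega> F I V"
    unfolding V_def by (rule visc_sub_upper_relaxed_limit[OF mono consistent T sol bounded])
  have super: "visc_super \<Omega> F I (lower_relaxed_limit (closure \<Omega>) Vh)"
    by (rule visc_super_lower_relaxed_limit[OF mono consistent T sol bounded])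
  have eq: "\<forall>x\<in>closure \<Omega>. V x = lower_relaxed_limit (closure \<Omega>) Vh x"
    unfolding V_def using relaxed_limits_coincide[OF comparison bounded sub[unfolded V_def] super] by blast
  have sol_V: "visc_sol \<Omega> F I V" using sub visc_super_cong[OF eq super] by (simp add: visc_sol_def)
  have bdd_V: "bdd_on (closure \<Omega>) V"
    using relaxed_limits_real(2)[OF bounded] unfolding V_def bdd_on_def by blast
  have "uniform_limit K Vh V (at_right 0)" if "compact K" "K \<subseteq> closure \<Omega>" for K
  proof (rule uniform_limit_if_relaxed_limits_agree[OF _ _ _ _ that])
    show "usc_on (closure \<Omega>) V" "lsc_on (closure \<Omega>) V"
      using sub sol_V unfolding visc_sub_def visc_sol_def visc_super_def by blast+
    show "\<forall>z\<in>closure \<Omega>. hr_limsup (closure \<Omega>) Vh z = ereal (V z)"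
      "\<forall>z\<in>closure \<Omega>. hr_liminf (closure \<Omega>) Vh z = ereal (V z)"
      using relaxed_limits_real(1,3)[OF bounded] eq unfolding V_def by auto
  qed
  thus ?thesis using bdd_V sol_V visc_sol_unique[OF comparison bdd_V sol_V] by blast
qed

end
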